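(* Let $\lambda$ be a regular cardinal, let $\mathfrak{A},\mathfrak{B}$ be $\lambda$-algebroidal categories all of whose morphisms are monomorphisms, and $\mathfrak{C}$ a category. Let $F:\mathfrak{A}\to\mathfrak{C}$, $G:\mathfrak{B}\to\mathfrak{C}$ be functors such that: $F$ is faithful; $F$ is $\lambda$-cocontinuous and $\mu_{<\lambda}$-cocontinuous for all $\mu<\lambda$; $F$ preserves $\lambda$-smallness with respect to $G$; $G$ is $\lambda_{<\lambda}$-cocontinuous; $G$ preserves monomorphisms; for all $A\in\mathfrak{A}_{<\lambda}$, $B\in\mathfrak{B}_{<\lambda}$ there are at most $\lambda$ morphisms $FA\to GB$ in $\mathfrak{C}$; and $(F\downarrow G)_{<\lambda}$ has the joint embedding property and the amalgamation property. Let $(U,u,T)$ be an $(F\downarrow G)$-universal, $(F\downarrow G)_{<\lambda}$-homogeneous object of $(F\downarrow G)$. Then $U$ is $\mathfrak{A}_{<\lambda}$-saturated if and only if $F\restriction_{\mathfrak{A}_{<\lambda}}$ and $G\restriction_{\mathfrak{B}_{<\lambda}}$ have the mixed amalgamation property.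
   Context: Comma category $(F\downarrow G)$: objects $(A,f,B)$ with $f:FA\to GB$; morphisms $(a,b):(A,f,B)\to(A',f',B')$ with $f'\circ Fa=Gb\circ f$. An ordinal $\lambda$ is viewed as a category ($i\to j$ iff $i\le j$); a $\lambda$-chain is a functor from $\lambda$. An object $A$ is $\lambda$-small if whenever $(S,(f_i)_{i<\lambda})$ is a limiting cocone of a $\lambda$-chain $H$ and $h:A\to S$, there are $j<\lambda$, $g:A\to Hj$ with $h=f_j\circ g$; $\mathfrak{C}_{<\lambda}$ denotes the full subcategory of $\lambda$-small objects. Semi-$\lambda$-algebroidal: for every $\mu\le\lambda$ all $\mu$-chains in $\mathfrak{C}_{<\lambda}$ have colimits and every object is a colimit of a $\lambda$-chain in $\mathfrak{C}_{<\lambda}$; $\lambda$-algebroidal: additionally at most $\lambda$ isomorphism types in $\mathfrak{C}_{<\lambda}$ and at most $\lambda$ morphisms between any two $\lambda$-small objects. $F$ is $\lambda$-cocontinuous if it preserves limiting cocones of $\lambda$-chains, and $\mu_{<\lambda}$-cocontinuous if it preserves limiting cocones of $\mu$-chains of $\lambda$-small objects. $F$ preserves $\lambda$-smallness w.r.t. $G$ if for every $\lambda$-chain $H$ in $\mathfrak{B}$ with limiting cocone $(B,(g_i))$, every $A\in\mathfrak{A}_{<\lambda}$ and $f:FA\to GB$ there are $j<\lambda$, $h:FA\to GHj$ with $Gg_j\circ h=f$. For a full subcategory $\mathfrak{C}^*$: $U$ is $\mathfrak{C}^*$-universal if every object of $\mathfrak{C}^*$ maps to $U$; $\mathfrak{C}^*$-homogeneous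 if for $A\in\mathfrak{C}^*$, $f,g:A\to U$ there is an automorphism $h$ of $U$ with $h\circ f=g$; $\mathfrak{C}^*$-saturated if for all $A,B\in\mathfrak{C}^*$, $f:A\to U$, $g:A\to B$ there is $h:B\to U$ with $h\circ g=f$. Joint embedding and amalgamation properties of a category are the usual ones (common target for two objects; commuting completion of a span). $F$ and $G$ have the mixed amalgamation property if for all $A,B\in\mathfrak{A}$, $T_1\in\mathfrak{B}$, $g:A\to B$, $a:FA\to GT_1$ there exist $T_2\in\mathfrak{B}$, $h:T_1\to T_2$, $b:FB\to GT_2$ with $b\circ Fg=Gh\circ a$. *)

theory Defs
  imports Main
begin

record ('o,'m) category =
  Obj  :: "'o set"
  Hom  :: "'o \<Rightarrow> 'o \<Rightarrow> 'm set"
  Id   :: "'o \<Rightarrow> 'm"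
  Comp :: "'m \<Rightarrow> 'm \<Rightarrow> 'm"   (* Comp C g f = g \<circ> f *)

definition category :: "('o,'m) category \<Rightarrow> bool" where
  "category C \<longleftrightarrow>
     (\<forall>X Y. Hom C X Y \<noteq> {} \<longrightarrow> X \<in> Obj C \<and> Y \<in> Obj C) \<and>
     (\<forall>X Y X' Y' f. f \<in> Hom C X Y \<and> f \<in> Hom C X' Y' \<longrightarrow> X = X' \<and> Y = Y') \<and>
     (\<forall>X \<in> Obj C. Id C X \<in> Hom C X X) \<and>
     (\<forall>X Y Z f g. f \<in> Hom C X Y \<and> g \<in> Hom C Y Z \<longrightarrow> Comp C g f \<in> Hom C X Z) \<and>
     (\<forall>X Y Z W f g h. f \<in> Hom C X Y \<and> g \<in> Hom C Y Z \<and> h \<in> Hom C Z W \<longrightarrow>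
         Comp C h (Comp C g f) = Comp C (Comp C h g) f) \<and>
     (\<forall>X Y f. f \<in> Hom C X Y \<longrightarrow> Comp C f (Id C X) = f \<and> Comp C (Id C Y) f = f)"

definition is_mono :: "('o,'m) category \<Rightarrow> 'm \<Rightarrow> bool" where
  "is_mono C f \<longleftrightarrow> (\<forall>X A B g h. f \<in> Hom C A B \<and> g \<in> Hom C X A \<and> h \<in> Hom C X A \<and>
        Comp C f g = Comp C f h \<longrightarrow> g = h)"

definition all_mono :: "('o,'m) category \<Rightarrow> bool" where
  "all_mono C \<longleftrightarrow> (\<forall>A B f. f \<in> Hom C A B \<longrightarrow> is_mono C f)"

definition iso_objs :: "('o,'m) category \<Rightarrow> 'o \<Rightarrow> 'o \<Rightarrow> bool" where
  "iso_objs C A B \<longleftrightarrow> (\<exists>f \<in> Hom C A B. \<exists>g \<in> Hom C B A.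
      Comp C g f = Id C A \<and> Comp C f g = Id C B)"

definition automorphism :: "('o,'m) category \<Rightarrow> 'o \<Rightarrow> 'm \<Rightarrow> bool" where
  "automorphism C U h \<longleftrightarrow> h \<in> Hom C U U \<and>
      (\<exists>g \<in> Hom C U U. Comp C g h = Id C U \<and> Comp C h g = Id C U)"

definition is_functor :: "('o1,'m1) category \<Rightarrow> ('o2,'m2) category \<Rightarrow>
    ('o1 \<Rightarrow> 'o2) \<Rightarrow> ('m1 \<Rightarrow> 'm2) \<Rightarrow> bool" where
  "is_functor C D Fo Fm \<longleftrightarrow>
     (\<forall>X \<in> Obj C. Fo X \<in> Obj D) \<and>
     (\<forall>X Y f. f \<in> Hom C X Y \<longrightarrow> Fm f \<in> Hom D (Fo X) (Fo Y)) \<and>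
     (\<forall>X \<in> Obj C. Fm (Id C X) = Id D (Fo X)) \<and>
     (\<forall>X Y Z f g. f \<in> Hom C X Y \<and> g \<in> Hom C Y Z \<longrightarrow> Fm (Comp C g f) = Comp D (Fm g) (Fm f))"

definition faithful :: "('o1,'m1) category \<Rightarrow> ('m1 \<Rightarrow> 'm2) \<Rightarrow> bool" where
  "faithful C Fm \<longleftrightarrow> (\<forall>X Y f g. f \<in> Hom C X Y \<and> g \<in> Hom C X Y \<and> Fm f = Fm g \<longrightarrow> f = g)"

definition preserves_monos :: "('o1,'m1) category \<Rightarrow> ('o2,'m2) category \<Rightarrow> ('m1 \<Rightarrow> 'm2) \<Rightarrow> bool" where
  "preserves_monos C D Fm \<longleftrightarrow> (\<forall>X Y f. f \<in> Hom C X Y \<and> is_mono C f \<longrightarrow> is_mono D (Fm f))"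

text \<open>An ordinal is represented by a well-order s; a s-chain is a functor from s (i \<rightarrow> j iff (i,j) \<in> s).\<close>

definition chain :: "('o,'m) category \<Rightarrow> 'i rel \<Rightarrow> ('i \<Rightarrow> 'o) \<Rightarrow> ('i \<Rightarrow> 'i \<Rightarrow> 'm) \<Rightarrow> bool" where
  "chain C s Ho Hm \<longleftrightarrow> Well_order s \<and>
     (\<forall>i \<in> Field s. Ho i \<in> Obj C) \<and>
     (\<forall>i j. (i,j) \<in> s \<longrightarrow> Hm i j \<in> Hom C (Ho i) (Ho j)) \<and>
     (\<forall>i \<in> Field s. Hm i i = Id C (Ho i)) \<and>
     (\<forall>i j k. (i,j) \<in> s \<and> (j,k) \<in> s \<longrightarrow> Comp C (Hm j k) (Hm i j) = Hm i k)"

definition cocone :: "('o,'m) category \<Rightarrow> 'i rel \<Rightarrow> ('i \<Rightarrow> 'o) \<Rightarrow> ('i \<Rightarrow> 'i \<Rightarrow> 'm)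
    \<Rightarrow> 'o \<Rightarrow> ('i \<Rightarrow> 'm) \<Rightarrow> bool" where
  "cocone C s Ho Hm S f \<longleftrightarrow> S \<in> Obj C \<and>
     (\<forall>i \<in> Field s. f i \<in> Hom C (Ho i) S) \<and>
     (\<forall>i j. (i,j) \<in> s \<longrightarrow> Comp C (f j) (Hm i j) = f i)"

definition limiting_cocone :: "('o,'m) category \<Rightarrow> 'i rel \<Rightarrow> ('i \<Rightarrow> 'o) \<Rightarrow> ('i \<Rightarrow> 'i \<Rightarrow> 'm)
    \<Rightarrow> 'o \<Rightarrow> ('i \<Rightarrow> 'm) \<Rightarrow> bool" where
  "limiting_cocone C s Ho Hm S f \<longleftrightarrow> cocone C s Ho Hm S f \<and>
     (\<forall>S' f'. cocone C s Ho Hm S' f' \<longrightarrow>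
        (\<exists>!h. h \<in> Hom C S S' \<and> (\<forall>i \<in> Field s. Comp C h (f i) = f' i)))"

definition has_colimit :: "('o,'m) category \<Rightarrow> 'i rel \<Rightarrow> ('i \<Rightarrow> 'o) \<Rightarrow> ('i \<Rightarrow> 'i \<Rightarrow> 'm) \<Rightarrow> bool" where
  "has_colimit C s Ho Hm \<longleftrightarrow> (\<exists>S f. limiting_cocone C s Ho Hm S f)"

text \<open>The cardinal lambda is represented by a cardinal order r (viewed as the initial ordinal).\<close>

definition small :: "('o,'m) category \<Rightarrow> 'i rel \<Rightarrow> 'o \<Rightarrow> bool" where
  "small C r A \<longleftrightarrow> A \<in> Obj C \<and>
     (\<forall>Ho Hm S f h. chain C r Ho Hm \<and> limiting_cocone C r Ho Hm S f \<and> h \<in> Hom C A S \<longrightarrow>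
        (\<exists>j \<in> Field r. \<exists>g \<in> Hom C A (Ho j). h = Comp C (f j) g))"

definition semi_algebroidal :: "('o,'m) category \<Rightarrow> 'i rel \<Rightarrow> bool" where
  "semi_algebroidal C r \<longleftrightarrow>
     (\<forall>s :: 'i rel. Well_order s \<and> (s, r) \<in> ordLeq \<longrightarrow>
        (\<forall>Ho Hm. chain C s Ho Hm \<and> (\<forall>i \<in> Field s. small C r (Ho i)) \<longrightarrow> has_colimit C s Ho Hm)) \<and>
     (\<forall>X \<in> Obj C. \<exists>Ho Hm f. chain C r Ho Hm \<and> (\<forall>i \<in> Field r. small C r (Ho i)) \<and>
        limiting_cocone C r Ho Hm X f)"

definition algebroidal :: "('o,'m) category \<Rightarrow> 'i rel \<Rightarrow> bool" where
  "algebroidal C r \<longleftrightarrow> semi_algebroidal C r \<and>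
     (\<exists>R. R \<subseteq> {A. small C r A} \<and> (card_of R, r) \<in> ordLeq \<and>
          (\<forall>A. small C r A \<longrightarrow> (\<exists>B \<in> R. iso_objs C A B))) \<and>
     (\<forall>A B. small C r A \<and> small C r B \<longrightarrow> (card_of (Hom C A B), r) \<in> ordLeq)"

definition regular_cardinal :: "'i rel \<Rightarrow> bool" where
  "regular_cardinal r \<longleftrightarrow> Card_order r \<and> \<not> finite (Field r) \<and> regularCard r"

definition preserves_colimits_of ::
  "('o1,'m1) category \<Rightarrow> ('o2,'m2) category \<Rightarrow> ('o1 \<Rightarrow> 'o2) \<Rightarrow> ('m1 \<Rightarrow> 'm2)
     \<Rightarrow> 'i rel \<Rightarrow> ('o1 \<Rightarrow> bool) \<Rightarrow> bool" where
  "preserves_colimits_of C D Fo Fm s P \<longleftrightarrow>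
     (\<forall>Ho Hm S f. chain C s Ho Hm \<and> (\<forall>i \<in> Field s. P (Ho i)) \<and> limiting_cocone C s Ho Hm S f \<longrightarrow>
        limiting_cocone D s (\<lambda>i. Fo (Ho i)) (\<lambda>i j. Fm (Hm i j)) (Fo S) (\<lambda>i. Fm (f i)))"

definition cocontinuous where
  "cocontinuous C D Fo Fm r \<longleftrightarrow> preserves_colimits_of C D Fo Fm r (\<lambda>_. True)"

text \<open>mu_{<lambda}-cocontinuous: preserves limiting cocones of mu-chains of lambda-small objects.\<close>
definition small_cocontinuous where
  "small_cocontinuous C D Fo Fm (s :: 'i rel) (r :: 'i rel) \<longleftrightarrow> preserves_colimits_of C D Fo Fm s (small C r)"

definition preserves_smallness_wrt ::
  "('oa,'ma) category \<Rightarrow> ('ob,'mb) category \<Rightarrow> ('oc,'mc) category \<Rightarrow>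
   ('oa \<Rightarrow> 'oc) \<Rightarrow> ('ob \<Rightarrow> 'oc) \<Rightarrow> ('mb \<Rightarrow> 'mc) \<Rightarrow> 'i rel \<Rightarrow> bool" where
  "preserves_smallness_wrt A B C Fo Go Gm r \<longleftrightarrow>
     (\<forall>Ho Hm T g X f. chain B r Ho Hm \<and> limiting_cocone B r Ho Hm T g \<and> small A r X \<and>
         f \<in> Hom C (Fo X) (Go T) \<longrightarrow>
        (\<exists>j \<in> Field r. \<exists>h \<in> Hom C (Fo X) (Go (Ho j)). Comp C (Gm (g j)) h = f))"

definition comma ::
  "('oa,'ma) category \<Rightarrow> ('ob,'mb) category \<Rightarrow> ('oc,'mc) category \<Rightarrow>
   ('oa \<Rightarrow> 'oc) \<Rightarrow> ('ma \<Rightarrow> 'mc) \<Rightarrow> ('ob \<Rightarrow> 'oc) \<Rightarrow> ('mb \<Rightarrow> 'mc) \<Rightarrow>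
   ('oa \<times> 'mc \<times> 'ob, ('oa \<times> 'mc \<times> 'ob) \<times> ('ma \<times> 'mb) \<times> ('oa \<times> 'mc \<times> 'ob)) category" where
  "comma A B C Fo Fm Go Gm =
     \<lparr> Obj = {(X, u, Y). X \<in> Obj A \<and> Y \<in> Obj B \<and> u \<in> Hom C (Fo X) (Go Y)},
       Hom = (\<lambda>(X, u, Y) (X', u', Y').
          {((X, u, Y), (a, b), (X', u', Y')) | a b.
             X \<in> Obj A \<and> Y \<in> Obj B \<and> u \<in> Hom C (Fo X) (Go Y) \<and>
             X' \<in> Obj A \<and> Y' \<in> Obj B \<and> u' \<in> Hom C (Fo X') (Go Y') \<and>
             a \<in> Hom A X X' \<and> b \<in> Hom B Y Y' \<and> Comp C u' (Fm a) = Comp C (Gm b) u}),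
       Id = (\<lambda>(X, u, Y). ((X, u, Y), (Id A X, Id B Y), (X, u, Y))),
       Comp = (\<lambda>(S', (a', b'), T') (S, (a, b), T). (S, (Comp A a' a, Comp B b' b), T')) \<rparr>"

definition joint_embedding :: "('o,'m) category \<Rightarrow> ('o \<Rightarrow> bool) \<Rightarrow> bool" where
  "joint_embedding C P \<longleftrightarrow>
     (\<forall>X Y. P X \<and> P Y \<longrightarrow> (\<exists>Z. P Z \<and> Hom C X Z \<noteq> {} \<and> Hom C Y Z \<noteq> {}))"

definition amalgamation :: "('o,'m) category \<Rightarrow> ('o \<Rightarrow> bool) \<Rightarrow> bool" where
  "amalgamation C P \<longleftrightarrow>
     (\<forall>X Y Z f g. P X \<and> P Y \<and> P Z \<and> f \<in> Hom C X Y \<and> g \<in> Hom C X Z \<longrightarrow>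
        (\<exists>W f' g'. P W \<and> f' \<in> Hom C Y W \<and> g' \<in> Hom C Z W \<and> Comp C f' f = Comp C g' g))"

definition universal :: "('o,'m) category \<Rightarrow> ('o \<Rightarrow> bool) \<Rightarrow> 'o \<Rightarrow> bool" where
  "universal C P U \<longleftrightarrow> U \<in> Obj C \<and> (\<forall>X. P X \<longrightarrow> Hom C X U \<noteq> {})"

definition homogeneous :: "('o,'m) category \<Rightarrow> ('o \<Rightarrow> bool) \<Rightarrow> 'o \<Rightarrow> bool" where
  "homogeneous C P U \<longleftrightarrow>
     (\<forall>X f g. P X \<and> f \<in> Hom C X U \<and> g \<in> Hom C X U \<longrightarrow>
        (\<exists>h. automorphism C U h \<and> Comp C h f = g))"

definition saturated :: "('o,'m) category \<Rightarrow> ('o \<Rightarrow> bool) \<Rightarrow> 'o \<Rightarrow> bool" where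
  "saturated C P U \<longleftrightarrow>
     (\<forall>X Y f g. P X \<and> P Y \<and> f \<in> Hom C X U \<and> g \<in> Hom C X Y \<longrightarrow>
        (\<exists>h \<in> Hom C Y U. Comp C h g = f))"

definition mixed_amalgamation ::
  "('oa,'ma) category \<Rightarrow> ('ob,'mb) category \<Rightarrow> ('oc,'mc) category \<Rightarrow>
   ('oa \<Rightarrow> 'oc) \<Rightarrow> ('ma \<Rightarrow> 'mc) \<Rightarrow> ('ob \<Rightarrow> 'oc) \<Rightarrow> ('mb \<Rightarrow> 'mc) \<Rightarrow>
   ('oa \<Rightarrow> bool) \<Rightarrow> ('ob \<Rightarrow> bool) \<Rightarrow> bool" where
  "mixed_amalgamation A B C Fo Fm Go Gm PA PB \<longleftrightarrow>
     (\<forall>X Y T1 g a. PA X \<and> PA Y \<and> PB T1 \<and> g \<in> Hom A X Y \<and> a \<in> Hom C (Fo X) (Go T1) \<longrightarrow>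
        (\<exists>T2 h b. PB T2 \<and> h \<in> Hom B T1 T2 \<and> b \<in> Hom C (Fo Y) (Go T2) \<and>
            Comp C b (Fm g) = Comp C (Gm h) a))"

end

theory Submission
  imports Defs
begin

text \<open>
  Write \<open>T\<close> as the colimit of a \<open>\<lambda>\<close>-chain of \<open>\<lambda>\<close>-small objects \<open>T\<^sub>i\<close>. Since \<open>F\<close> preserves
  \<open>\<lambda>\<close>-smallness with respect to \<open>G\<close>, every arrow \<open>FY \<rightarrow> GT\<close> with \<open>Y\<close> small factors through some
  \<open>GT\<^sub>i\<close>, and since \<open>GT\<^sub>i \<rightarrow> GT\<close> is monic, equations between arrows into \<open>GT\<^sub>i\<close> can be checked
  in \<open>GT\<close>. With this, saturation of \<open>U\<close> yields mixed amalgamation by restricting the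
  amalgamating arrow to a stage \<open>T\<^sub>i\<close>. Conversely, for \<open>f : X \<rightarrow> U\<close> and \<open>g : X \<rightarrow> Y\<close>, factor
  \<open>u \<circ> Ff\<close> through a stage \<open>T\<^sub>j\<close>, amalgamate along \<open>g\<close>, embed the result into \<open>(U,u,T)\<close> by
  universality, and compare the two resulting arrows out of \<open>(X,c,T\<^sub>j)\<close> by homogeneity.

  This needs \<open>(X,c,T\<^sub>j)\<close> to be \<open>\<lambda>\<close>-small in the comma category, which rests on colimits of
  arbitrary \<open>\<lambda>\<close>-chains in \<open>A\<close> and \<open>B\<close>. In a semi-\<open>\<lambda>\<close>-algebroidal category with monic arrows
  such colimits exist: presenting each member of the chain as a colimit of small objects, a
  diagonal choice of stages gives a chain of small objects with the same colimit.
\<close>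

section \<open>Categories, chains and cocones\<close>

lemma category_hom_objs: "category C \<Longrightarrow> f \<in> Hom C X Y \<Longrightarrow> X \<in> Obj C \<and> Y \<in> Obj C"
  unfolding category_def by (elim conjE; fast)

lemma category_id_hom: "category C \<Longrightarrow> X \<in> Obj C \<Longrightarrow> Id C X \<in> Hom C X X"
  unfolding category_def by (elim conjE; fast)

lemma category_comp_hom:
  "category C \<Longrightarrow> f \<in> Hom C X Y \<Longrightarrow> g \<in> Hom C Y Z \<Longrightarrow> Comp C g f \<in> Hom C X Z"
  unfolding category_def by (elim conjE; fast)

lemma category_assoc:
  "category C \<Longrightarrow> f \<in> Hom C X Y \<Longrightarrow> g \<in> Hom C Y Z \<Longrightarrow> h \<in> Hom C Z W \<Longrightarrow>
   Comp C h (Comp C g f) = Comp C (Comp C h g) f"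
  unfolding category_def by (elim conjE; fast)

lemma category_comp_id: "category C \<Longrightarrow> f \<in> Hom C X Y \<Longrightarrow> Comp C f (Id C X) = f"
  unfolding category_def by (elim conjE; fast)

lemma category_id_comp: "category C \<Longrightarrow> f \<in> Hom C X Y \<Longrightarrow> Comp C (Id C Y) f = f"
  unfolding category_def by (elim conjE; fast)

lemma is_mono_cancel:
  "is_mono C m \<Longrightarrow> m \<in> Hom C Y Z \<Longrightarrow> g \<in> Hom C X Y \<Longrightarrow> h \<in> Hom C X Y \<Longrightarrow>
   Comp C m g = Comp C m h \<Longrightarrow> g = h"
  unfolding is_mono_def by blast

lemma all_mono_cancel:
  "all_mono C \<Longrightarrow> m \<in> Hom C Y Z \<Longrightarrow> g \<in> Hom C X Y \<Longrightarrow> h \<in> Hom C X Y \<Longrightarrow>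
   Comp C m g = Comp C m h \<Longrightarrow> g = h"
  unfolding all_mono_def is_mono_def by blast

lemma preserves_monos_all_mono:
  "preserves_monos B C Gm \<Longrightarrow> all_mono B \<Longrightarrow> f \<in> Hom B X Y \<Longrightarrow> is_mono C (Gm f)"
  unfolding preserves_monos_def all_mono_def by blast

lemma functor_obj: "is_functor C D Fo Fm \<Longrightarrow> X \<in> Obj C \<Longrightarrow> Fo X \<in> Obj D"
  unfolding is_functor_def by blast

lemma functor_hom: "is_functor C D Fo Fm \<Longrightarrow> f \<in> Hom C X Y \<Longrightarrow> Fm f \<in> Hom D (Fo X) (Fo Y)"
  unfolding is_functor_def by blast

lemma functor_id: "is_functor C D Fo Fm \<Longrightarrow> X \<in> Obj C \<Longrightarrow> Fm (Id C X) = Id D (Fo X)"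
  unfolding is_functor_def by blast

lemma functor_comp:
  "is_functor C D Fo Fm \<Longrightarrow> f \<in> Hom C X Y \<Longrightarrow> g \<in> Hom C Y Z \<Longrightarrow>
   Fm (Comp C g f) = Comp D (Fm g) (Fm f)"
  unfolding is_functor_def by blast

lemma chain_well_order: "chain C s H M \<Longrightarrow> Well_order s"
  unfolding chain_def by blast

lemma chain_obj: "chain C s H M \<Longrightarrow> i \<in> Field s \<Longrightarrow> H i \<in> Obj C"
  unfolding chain_def by blast

lemma chain_hom: "chain C s H M \<Longrightarrow> (i,j) \<in> s \<Longrightarrow> M i j \<in> Hom C (H i) (H j)"
  unfolding chain_def by blast

lemma chain_id: "chain C s H M \<Longrightarrow> i \<in> Field s \<Longrightarrow> M i i = Id C (H i)"
  unfolding chain_def by blast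

lemma chain_comp:
  "chain C s H M \<Longrightarrow> (i,j) \<in> s \<Longrightarrow> (j,k) \<in> s \<Longrightarrow> Comp C (M j k) (M i j) = M i k"
  unfolding chain_def by blast

lemma chain_upper_bound:
  assumes "chain C s H M" "i \<in> Field s" "j \<in> Field s"
  shows "\<exists>k \<in> Field s. (i,k) \<in> s \<and> (j,k) \<in> s"
proof -
  have "wo_rel s" using chain_well_order[OF assms(1)] by (simp add: wo_rel_def)
  from wo_rel.max2_greater_among[OF this assms(2,3)] show ?thesis
    using assms(2,3) by (intro bexI[of _ "wo_rel.max2 s i j"]) auto
qed

lemma cocone_obj: "cocone C s H M S f \<Longrightarrow> S \<in> Obj C"
  unfolding cocone_def by blast

lemma cocone_hom: "cocone C s H M S f \<Longrightarrow> i \<in> Field s \<Longrightarrow> f i \<in> Hom C (H i) S"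
  unfolding cocone_def by blast

lemma cocone_comm: "cocone C s H M S f \<Longrightarrow> (i,j) \<in> s \<Longrightarrow> Comp C (f j) (M i j) = f i"
  unfolding cocone_def by blast

lemma cocone_factor_shift:
  assumes cat: "category C" and ch: "chain C s H M" and co: "cocone C s H M S f"
    and ij: "(i,j) \<in> s" and x: "x \<in> Hom C X (H i)"
  shows "Comp C (M i j) x \<in> Hom C X (H j)" and "Comp C (f j) (Comp C (M i j) x) = Comp C (f i) x"
proof -
  show "Comp C (M i j) x \<in> Hom C X (H j)" using category_comp_hom[OF cat x chain_hom[OF ch ij]] .
  have "f j \<in> Hom C (H j) S" using cocone_hom[OF co] ij by (meson FieldI2)
  then show "Comp C (f j) (Comp C (M i j) x) = Comp C (f i) x"
    using category_assoc[OF cat x chain_hom[OF ch ij]] cocone_comm[OF co ij] by simp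
qed

lemma limiting_cocone_cocone: "limiting_cocone C s H M S f \<Longrightarrow> cocone C s H M S f"
  unfolding limiting_cocone_def by blast

lemma limiting_cocone_factor:
  "limiting_cocone C s H M S f \<Longrightarrow> cocone C s H M S' f' \<Longrightarrow>
   \<exists>h \<in> Hom C S S'. \<forall>i \<in> Field s. Comp C h (f i) = f' i"
  unfolding limiting_cocone_def by blast

lemma limiting_cocone_eq:
  assumes cat: "category C" and ch: "chain C s H M" and L: "limiting_cocone C s H M S f"
    and h: "h \<in> Hom C S S'" and h': "h' \<in> Hom C S S'"
    and eq: "\<And>i. i \<in> Field s \<Longrightarrow> Comp C h (f i) = Comp C h' (f i)"
  shows "h = h'"
proof -
  have co: "cocone C s H M S f" using L by (rule limiting_cocone_cocone)
  have "cocone C s H M S' (\<lambda>i. Comp C h (f i))"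
    unfolding cocone_def
  proof (intro conjI ballI allI impI)
    show "S' \<in> Obj C" using category_hom_objs[OF cat h] by blast
    fix i assume "i \<in> Field s"
    then show "Comp C h (f i) \<in> Hom C (H i) S'"
      using category_comp_hom[OF cat cocone_hom[OF co] h] by blast
  next
    fix i j assume ij: "(i,j) \<in> s"
    have fj: "f j \<in> Hom C (H j) S" using cocone_hom[OF co] ij by (meson FieldI2)
    show "Comp C (Comp C h (f j)) (M i j) = Comp C h (f i)"
      using category_assoc[OF cat chain_hom[OF ch ij] fj h] cocone_comm[OF co ij] by simp
  qed
  then show ?thesis using L h h' eq unfolding limiting_cocone_def by metis
qed

lemma functor_chain:
  assumes F: "is_functor C D Fo Fm" and ch: "chain C s H M"
  shows "chain D s (\<lambda>i. Fo (H i)) (\<lambda>i j. Fm (M i j))"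
  unfolding chain_def
  using chain_well_order[OF ch] functor_obj[OF F chain_obj[OF ch]] functor_hom[OF F chain_hom[OF ch]]
    functor_id[OF F chain_obj[OF ch]] chain_id[OF ch] functor_comp[OF F chain_hom[OF ch] chain_hom[OF ch]]
    chain_comp[OF ch]
  by metis

lemma functor_cocone:
  assumes F: "is_functor C D Fo Fm" and ch: "chain C s H M" and co: "cocone C s H M S f"
  shows "cocone D s (\<lambda>i. Fo (H i)) (\<lambda>i j. Fm (M i j)) (Fo S) (\<lambda>i. Fm (f i))"
  unfolding cocone_def
  using functor_obj[OF F cocone_obj[OF co]] functor_hom[OF F cocone_hom[OF co]]
    functor_comp[OF F chain_hom[OF ch] cocone_hom[OF co]] cocone_comm[OF co]
  by (metis FieldI2)

lemma small_obj: "small C r X \<Longrightarrow> X \<in> Obj C"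
  unfolding small_def by blast

lemma small_factor:
  "small C r X \<Longrightarrow> chain C r H M \<Longrightarrow> limiting_cocone C r H M S f \<Longrightarrow> h \<in> Hom C X S \<Longrightarrow>
   \<exists>j \<in> Field r. \<exists>g \<in> Hom C X (H j). h = Comp C (f j) g"
  unfolding small_def by blast

lemma semi_algebroidal_presentation:
  assumes "semi_algebroidal C r" "X \<in> Obj C"
  obtains H M p where "chain C r H M" "\<And>i. i \<in> Field r \<Longrightarrow> small C r (H i)" "limiting_cocone C r H M X p"
  using assms unfolding semi_algebroidal_def by blast

lemma small_factor_through_cocone:
  assumes cat: "category C" and mono: "all_mono C" and X: "small C r X"
    and ch: "chain C r H M" and lim: "limiting_cocone C r H M L l" and co: "cocone C r H M S p"
    and \<alpha>: "\<alpha> \<in> Hom C S L" and \<alpha>p: "\<And>i. i \<in> Field r \<Longrightarrow> Comp C \<alpha> (p i) = l i"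
    and x: "x \<in> Hom C X S"
  shows "\<exists>j \<in> Field r. \<exists>x' \<in> Hom C X (H j). x = Comp C (p j) x'"
proof -
  obtain j x' where j: "j \<in> Field r" and x': "x' \<in> Hom C X (H j)" and "Comp C \<alpha> x = Comp C (l j) x'"
    using small_factor[OF X ch lim category_comp_hom[OF cat x \<alpha>]] by blast
  then have "Comp C \<alpha> x = Comp C \<alpha> (Comp C (p j) x')"
    using category_assoc[OF cat x' cocone_hom[OF co j] \<alpha>] \<alpha>p[OF j] by simp
  then have "x = Comp C (p j) x'"
    by (rule all_mono_cancel[OF mono \<alpha> x category_comp_hom[OF cat x' cocone_hom[OF co j]]])
  with j x' show ?thesis by blast
qed

section \<open>Colimits of chains in semi-algebroidal categories\<close>

lemma regular_card_bounded:
  assumes card: "Card_order r" and reg: "regularCard r"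
    and K: "K \<subseteq> Field r" and small: "(card_of K, r) \<in> ordLess"
  shows "\<exists>x \<in> Field r. \<forall>b \<in> K. (b,x) \<in> r"
proof -
  have wo: "wo_rel r" using card by (simp add: card_order_on_def wo_rel_def)
  have "relChain r (under r)"
    unfolding relChain_def using under_incr[OF wo_rel.TRANS[OF wo]] by blast
  moreover have "K \<subseteq> (\<Union>i \<in> Field r. under r i)"
    using K wo_rel.REFL[OF wo] unfolding under_def refl_on_def by blast
  ultimately obtain i where "i \<in> Field r" "K \<subseteq> under r i"
    using regularCard_UNION[OF card reg _ _ small] by blast
  then show ?thesis unfolding under_def by blast
qed

lemma infinite_card_strict_upper_bound:
  assumes card: "Card_order r" and inf: "\<not> finite (Field r)"
    and i: "i \<in> Field r" and j: "j \<in> Field r"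
  shows "\<exists>k \<in> Field r. (i,k) \<in> r \<and> k \<noteq> i \<and> (j,k) \<in> r"
proof -
  have wo: "wo_rel r" using card by (simp add: card_order_on_def wo_rel_def)
  let ?m = "wo_rel.max2 r i j"
  have m: "?m \<in> Field r" "(i,?m) \<in> r" "(j,?m) \<in> r"
    using wo_rel.max2_greater_among[OF wo i j] i j by auto
  obtain k where k: "k \<in> Field r" "k \<notin> under r ?m"
    using Card_order_infinite_not_under[OF card inf] under_Field[of r ?m] by blast
  then have "(?m,k) \<in> r" using wo_rel.TOTALS[OF wo] m(1) unfolding under_def by blast
  moreover have "k \<noteq> i" using k(2) m(2) unfolding under_def by blast
  ultimately show ?thesis
    using k(1) m(2,3) wo_rel.TRANS[OF wo] unfolding trans_def by blast
qed

locale chain_in_semi_algebroidal =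
  fixes r :: "'i rel" and C :: "('o,'m) category" and X :: "'i \<Rightarrow> 'o" and a :: "'i \<Rightarrow> 'i \<Rightarrow> 'm"
  assumes regular: "regular_cardinal r" and cat: "category C" and mono: "all_mono C"
    and semi_alg: "semi_algebroidal C r" and chain: "chain C r X a"
begin

abbreviation comp (infixl "\<cdot>" 70) where "g \<cdot> f \<equiv> Comp C g f"

lemma assoc: "f \<in> Hom C X1 Y \<Longrightarrow> g \<in> Hom C Y Z \<Longrightarrow> h \<in> Hom C Z W \<Longrightarrow> h \<cdot> (g \<cdot> f) = h \<cdot> g \<cdot> f"
  using category_assoc[OF cat] by blast

lemma comp_hom: "f \<in> Hom C X1 Y \<Longrightarrow> g \<in> Hom C Y Z \<Longrightarrow> g \<cdot> f \<in> Hom C X1 Z"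
  using category_comp_hom[OF cat] by blast

lemma card_order: "Card_order r" and infinite: "\<not> finite (Field r)" and regular_card: "regularCard r"
  using regular unfolding regular_cardinal_def by auto

lemma wo: "wo_rel r"
  using card_order by (simp add: card_order_on_def wo_rel_def)

lemma r_refl: "i \<in> Field r \<Longrightarrow> (i,i) \<in> r"
  using wo_rel.REFL[OF wo] unfolding refl_on_def by blast

lemma r_trans: "(i,j) \<in> r \<Longrightarrow> (j,k) \<in> r \<Longrightarrow> (i,k) \<in> r"
  using wo_rel.TRANS[OF wo] unfolding trans_def by blast

lemma r_total: "i \<in> Field r \<Longrightarrow> j \<in> Field r \<Longrightarrow> (i,j) \<in> r \<or> (j,i) \<in> r"
  using wo_rel.TOTALS[OF wo] by blast

lemma a_hom: "(i,j) \<in> r \<Longrightarrow> a i j \<in> Hom C (X i) (X j)"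
  using chain_hom[OF chain] .

lemma a_comp: "(i,j) \<in> r \<Longrightarrow> (j,k) \<in> r \<Longrightarrow> a j k \<cdot> a i j = a i k"
  using chain_comp[OF chain] .

lemma a_id_comp: "i \<in> Field r \<Longrightarrow> f \<in> Hom C Y (X i) \<Longrightarrow> a i i \<cdot> f = f"
  using chain_id[OF chain] category_id_comp[OF cat] by metis

definition presentation where
  "presentation i = (SOME (Z, e, p). chain C r Z e \<and> (\<forall>k \<in> Field r. small C r (Z k)) \<and>
     limiting_cocone C r Z e (X i) p)"

definition "stage i = fst (presentation i)"
definition "stage_map i = fst (snd (presentation i))"
definition "stage_leg i = snd (snd (presentation i))"

lemma presentation:
  assumes i: "i \<in> Field r"
  shows "chain C r (stage i) (stage_map i) \<and> (\<forall>k \<in> Field r. small C r (stage i k)) \<and>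
    limiting_cocone C r (stage i) (stage_map i) (X i) (stage_leg i)"
proof -
  obtain Z e p where "chain C r Z e \<and> (\<forall>k \<in> Field r. small C r (Z k)) \<and> limiting_cocone C r Z e (X i) p"
    using semi_alg chain_obj[OF chain i] unfolding semi_algebroidal_def by blast
  then have "\<exists>t. case t of (Z, e, p) \<Rightarrow> chain C r Z e \<and> (\<forall>k \<in> Field r. small C r (Z k)) \<and>
      limiting_cocone C r Z e (X i) p"
    by (intro exI[of _ "(Z, e, p)"]) simp
  from someI_ex[OF this] show ?thesis
    unfolding stage_def stage_map_def stage_leg_def presentation_def case_prod_unfold .
qed

lemma stage_chain: "i \<in> Field r \<Longrightarrow> chain C r (stage i) (stage_map i)"
  using presentation by blast

lemma stage_small: "i \<in> Field r \<Longrightarrow> k \<in> Field r \<Longrightarrow> small C r (stage i k)"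
  using presentation by blast

lemma stage_limiting: "i \<in> Field r \<Longrightarrow> limiting_cocone C r (stage i) (stage_map i) (X i) (stage_leg i)"
  using presentation by blast

lemma stage_leg_hom: "i \<in> Field r \<Longrightarrow> k \<in> Field r \<Longrightarrow> stage_leg i k \<in> Hom C (stage i k) (X i)"
  using cocone_hom[OF limiting_cocone_cocone[OF stage_limiting]] .

lemma stage_leg_comm: "i \<in> Field r \<Longrightarrow> (k,l) \<in> r \<Longrightarrow> stage_leg i l \<cdot> stage_map i k l = stage_leg i k"
  using cocone_comm[OF limiting_cocone_cocone[OF stage_limiting]] .

lemma stage_map_hom: "i \<in> Field r \<Longrightarrow> (k,l) \<in> r \<Longrightarrow> stage_map i k l \<in> Hom C (stage i k) (stage i l)"
  using chain_hom[OF stage_chain] .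

definition factors_through :: "'i \<Rightarrow> 'i \<Rightarrow> 'i \<Rightarrow> 'i \<Rightarrow> bool" where
  "factors_through b m g k \<longleftrightarrow> k \<in> Field r \<and>
     (\<exists>t \<in> Hom C (stage b m) (stage g k). a b g \<cdot> stage_leg b m = stage_leg g k \<cdot> t)"

lemma factors_through_exists:
  assumes bg: "(b,g) \<in> r" and m: "m \<in> Field r"
  shows "\<exists>k. factors_through b m g k"
proof -
  have b: "b \<in> Field r" and g: "g \<in> Field r" using bg by (auto intro: FieldI1 FieldI2)
  have "a b g \<cdot> stage_leg b m \<in> Hom C (stage b m) (X g)"
    using comp_hom[OF stage_leg_hom[OF b m] a_hom[OF bg]] .
  then show ?thesis
    using small_factor[OF stage_small[OF b m] stage_chain[OF g] stage_limiting[OF g]]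
    unfolding factors_through_def by metis
qed

lemma factors_through_mono:
  assumes f: "factors_through b m g k" and bg: "(b,g) \<in> r" and mm: "(m',m) \<in> r" and kk: "(k,k') \<in> r"
  shows "factors_through b m' g k'"
proof -
  obtain t where t: "t \<in> Hom C (stage b m) (stage g k)" "a b g \<cdot> stage_leg b m = stage_leg g k \<cdot> t"
    using f unfolding factors_through_def by blast
  have b: "b \<in> Field r" and g: "g \<in> Field r" and m: "m \<in> Field r" and k': "k' \<in> Field r"
    using bg mm kk by (auto intro: FieldI1 FieldI2)
  have k: "k \<in> Field r" using f unfolding factors_through_def by blast
  have e: "stage_map b m' m \<in> Hom C (stage b m') (stage b m)" using stage_map_hom[OF b mm] .
  have e': "stage_map g k k' \<in> Hom C (stage g k) (stage g k')" using stage_map_hom[OF g kk] .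
  let ?t = "stage_map g k k' \<cdot> (t \<cdot> stage_map b m' m)"
  have "a b g \<cdot> stage_leg b m' = a b g \<cdot> (stage_leg b m \<cdot> stage_map b m' m)"
    using stage_leg_comm[OF b mm] by simp
  also have "\<dots> = stage_leg g k \<cdot> t \<cdot> stage_map b m' m"
    using assoc[OF e stage_leg_hom[OF b m] a_hom[OF bg]] t(2) by simp
  also have "\<dots> = stage_leg g k' \<cdot> stage_map g k k' \<cdot> (t \<cdot> stage_map b m' m)"
    using assoc[OF e t(1) stage_leg_hom[OF g k]] stage_leg_comm[OF g kk] by simp
  also have "\<dots> = stage_leg g k' \<cdot> ?t"
    using assoc[OF comp_hom[OF e t(1)] e' stage_leg_hom[OF g k']] by simp
  finally show ?thesis
    unfolding factors_through_def using k' comp_hom[OF comp_hom[OF e t(1)] e'] by blast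
qed

definition "factor_index b m g = (SOME k. factors_through b m g k)"

lemma factor_index: "(b,g) \<in> r \<Longrightarrow> m \<in> Field r \<Longrightarrow> factors_through b m g (factor_index b m g)"
  unfolding factor_index_def using factors_through_exists by (meson someI_ex)

text \<open>
  The diagonal: \<open>diag g\<close> is a stage of \<open>X g\<close> through which, for every \<open>b < g\<close>, all stages of
  \<open>X b\<close> up to \<open>max (diag b) g\<close> factor. Bounding by \<open>diag b\<close> makes the diagonal stages a chain,
  bounding by \<open>g\<close> makes them exhaust every \<open>X i\<close>. There are fewer than \<open>\<lambda>\<close> requirements at
  each \<open>g\<close>, so regularity of \<open>\<lambda>\<close> lets the recursion continue.
\<close>

definition diag_step :: "('i \<Rightarrow> 'i) \<Rightarrow> 'i \<Rightarrow> 'i" where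
  "diag_step d g = (SOME x. x \<in> Field r \<and> (\<forall>b. (b,g) \<in> r - Relation.Id \<longrightarrow>
     factor_index b (wo_rel.max2 r (d b) g) g \<in> Field r \<longrightarrow>
     (factor_index b (wo_rel.max2 r (d b) g) g, x) \<in> r))"

definition "diag = wfrec (r - Relation.Id) diag_step"

lemma diag:
  assumes g: "g \<in> Field r"
  shows "diag g \<in> Field r \<and> (\<forall>b. (b,g) \<in> r - Relation.Id \<longrightarrow>
    factor_index b (wo_rel.max2 r (diag b) g) g \<in> Field r \<longrightarrow>
    (factor_index b (wo_rel.max2 r (diag b) g) g, diag g) \<in> r)"
proof -
  let ?d = "cut diag (r - Relation.Id) g"
  let ?idx = "\<lambda>b. factor_index b (wo_rel.max2 r (?d b) g) g"
  have unfold: "diag g = diag_step ?d g"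
    unfolding diag_def by (rule wfrec[OF wo_rel.WF[OF wo]])
  let ?S = "?idx ` underS r g \<inter> Field r"
  have "(card_of ?S, card_of (?idx ` underS r g)) \<in> ordLeq" by (rule card_of_mono1) blast
  moreover have "(card_of (?idx ` underS r g), card_of (underS r g)) \<in> ordLeq" by (rule card_of_image)
  moreover have "(card_of (underS r g), r) \<in> ordLess" using card_of_underS[OF card_order g] .
  ultimately have "(card_of ?S, r) \<in> ordLess" by (meson ordLeq_ordLess_trans ordLeq_transitive)
  then obtain x where "x \<in> Field r" "\<forall>c \<in> ?S. (c,x) \<in> r"
    using regular_card_bounded[OF card_order regular_card] by blast
  then have "\<exists>x. x \<in> Field r \<and> (\<forall>b. (b,g) \<in> r - Relation.Id \<longrightarrow> ?idx b \<in> Field r \<longrightarrow> (?idx b, x) \<in> r)"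
    unfolding underS_def by blast
  from someI_ex[OF this] have "diag_step ?d g \<in> Field r \<and>
      (\<forall>b. (b,g) \<in> r - Relation.Id \<longrightarrow> ?idx b \<in> Field r \<longrightarrow> (?idx b, diag_step ?d g) \<in> r)"
    unfolding diag_step_def .
  moreover have "\<And>b. (b,g) \<in> r - Relation.Id \<Longrightarrow> ?d b = diag b" by (simp add: cut_apply)
  ultimately show ?thesis unfolding unfold[symmetric] by simp
qed

lemma diag_field: "g \<in> Field r \<Longrightarrow> diag g \<in> Field r"
  using diag by blast

lemma factors_through_diag:
  assumes bg: "(b,g) \<in> r" and ne: "b \<noteq> g" and m: "m \<in> Field r"
    and mm: "(m,g) \<in> r \<or> (m, diag b) \<in> r"
  shows "factors_through b m g (diag g)"
proof -
  have b: "b \<in> Field r" and g: "g \<in> Field r" using bg by (auto intro: FieldI1 FieldI2)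
  let ?M = "wo_rel.max2 r (diag b) g"
  have M: "?M \<in> Field r" "(diag b, ?M) \<in> r" "(g, ?M) \<in> r"
    using wo_rel.max2_greater_among[OF wo diag_field[OF b] g] diag_field[OF b] g by auto
  have mM: "(m, ?M) \<in> r" using mm M r_trans by blast
  have f: "factors_through b ?M g (factor_index b ?M g)" using factor_index[OF bg M(1)] .
  then have "(factor_index b ?M g, diag g) \<in> r"
    using diag[OF g] bg ne unfolding factors_through_def by blast
  from factors_through_mono[OF f bg mM this] show ?thesis .
qed

definition "diag_obj g = stage g (diag g)"
definition "diag_leg g = stage_leg g (diag g)"
definition "diag_map b g = (SOME t. t \<in> Hom C (diag_obj b) (diag_obj g) \<and> a b g \<cdot> diag_leg b = diag_leg g \<cdot> t)"

lemma diag_leg_hom: "g \<in> Field r \<Longrightarrow> diag_leg g \<in> Hom C (diag_obj g) (X g)"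
  unfolding diag_leg_def diag_obj_def using stage_leg_hom diag_field by blast

lemma diag_obj_small: "g \<in> Field r \<Longrightarrow> small C r (diag_obj g)"
  unfolding diag_obj_def using stage_small diag_field by blast

lemma diag_id_hom: "g \<in> Field r \<Longrightarrow> Id C (diag_obj g) \<in> Hom C (diag_obj g) (diag_obj g)"
  using category_id_hom[OF cat small_obj[OF diag_obj_small]] .

lemma diag_leg_cancel:
  "g \<in> Field r \<Longrightarrow> t \<in> Hom C Y (diag_obj g) \<Longrightarrow> t' \<in> Hom C Y (diag_obj g) \<Longrightarrow>
   diag_leg g \<cdot> t = diag_leg g \<cdot> t' \<Longrightarrow> t = t'"
  using all_mono_cancel[OF mono diag_leg_hom] by blast

lemma diag_map:
  assumes bg: "(b,g) \<in> r"
  shows "diag_map b g \<in> Hom C (diag_obj b) (diag_obj g) \<and> a b g \<cdot> diag_leg b = diag_leg g \<cdot> diag_map b g"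
proof -
  have "\<exists>t. t \<in> Hom C (diag_obj b) (diag_obj g) \<and> a b g \<cdot> diag_leg b = diag_leg g \<cdot> t"
  proof (cases "b = g")
    case True
    then have g: "g \<in> Field r" using bg by (auto intro: FieldI1)
    have "a g g \<cdot> diag_leg g = diag_leg g \<cdot> Id C (diag_obj g)"
      using a_id_comp[OF g diag_leg_hom[OF g]] category_comp_id[OF cat diag_leg_hom[OF g]] by simp
    then show ?thesis using True diag_id_hom[OF g] by blast
  next
    case False
    have b: "b \<in> Field r" using bg by (auto intro: FieldI1)
    have "factors_through b (diag b) g (diag g)"
      using factors_through_diag[OF bg False diag_field[OF b]] r_refl[OF diag_field[OF b]] by blast
    then show ?thesis unfolding factors_through_def diag_obj_def diag_leg_def by blast
  qed
  then show ?thesis unfolding diag_map_def by (rule someI_ex)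
qed

lemma diag_map_hom: "(b,g) \<in> r \<Longrightarrow> diag_map b g \<in> Hom C (diag_obj b) (diag_obj g)"
  using diag_map by blast

lemma diag_map_comm: "(b,g) \<in> r \<Longrightarrow> a b g \<cdot> diag_leg b = diag_leg g \<cdot> diag_map b g"
  using diag_map by blast

lemma diag_chain: "chain C r diag_obj diag_map"
  unfolding chain_def
proof (intro conjI allI impI ballI)
  show "Well_order r" using wo by (simp add: wo_rel_def)
next
  fix i assume "i \<in> Field r" then show "diag_obj i \<in> Obj C" using small_obj[OF diag_obj_small] by blast
next
  fix i j assume "(i,j) \<in> r" then show "diag_map i j \<in> Hom C (diag_obj i) (diag_obj j)" by (rule diag_map_hom)
next
  fix i assume i: "i \<in> Field r"
  have ii: "(i,i) \<in> r" using r_refl[OF i] .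
  have "diag_leg i \<cdot> diag_map i i = diag_leg i \<cdot> Id C (diag_obj i)"
    using diag_map_comm[OF ii] a_id_comp[OF i diag_leg_hom[OF i]]
      category_comp_id[OF cat diag_leg_hom[OF i]] by simp
  then show "diag_map i i = Id C (diag_obj i)"
    using diag_leg_cancel[OF i diag_map_hom[OF ii] diag_id_hom[OF i]] by blast
next
  fix i j k assume "(i,j) \<in> r \<and> (j,k) \<in> r"
  then have ij: "(i,j) \<in> r" and jk: "(j,k) \<in> r" by auto
  have ik: "(i,k) \<in> r" using r_trans[OF ij jk] .
  have i: "i \<in> Field r" and j: "j \<in> Field r" and k: "k \<in> Field r"
    using ij jk by (auto intro: FieldI1 FieldI2)
  have "diag_leg k \<cdot> (diag_map j k \<cdot> diag_map i j) = a j k \<cdot> diag_leg j \<cdot> diag_map i j"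
    using assoc[OF diag_map_hom[OF ij] diag_map_hom[OF jk] diag_leg_hom[OF k]] diag_map_comm[OF jk] by simp
  also have "\<dots> = a j k \<cdot> a i j \<cdot> diag_leg i"
    using assoc[OF diag_map_hom[OF ij] diag_leg_hom[OF j] a_hom[OF jk]]
      assoc[OF diag_leg_hom[OF i] a_hom[OF ij] a_hom[OF jk]] diag_map_comm[OF ij] by simp
  also have "\<dots> = diag_leg k \<cdot> diag_map i k" using a_comp[OF ij jk] diag_map_comm[OF ik] by simp
  finally show "diag_map j k \<cdot> diag_map i j = diag_map i k"
    using diag_leg_cancel[OF k comp_hom[OF diag_map_hom[OF ij] diag_map_hom[OF jk]] diag_map_hom[OF ik]]
    by blast
qed

definition "diag_colimit = (SOME (L, l). limiting_cocone C r diag_obj diag_map L l)"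
definition "colim = fst diag_colimit"
definition "colim_leg = snd diag_colimit"

lemma colim_limiting: "limiting_cocone C r diag_obj diag_map colim colim_leg"
proof -
  have "(r, r) \<in> ordLeq" using ordLeq_refl[OF card_order] .
  then have "has_colimit C r diag_obj diag_map"
    using semi_alg diag_chain diag_obj_small wo unfolding semi_algebroidal_def wo_rel_def by blast
  then obtain L l where "limiting_cocone C r diag_obj diag_map L l" unfolding has_colimit_def by blast
  then have "\<exists>t. case t of (L, l) \<Rightarrow> limiting_cocone C r diag_obj diag_map L l" by auto
  from someI_ex[OF this] show ?thesis
    unfolding colim_def colim_leg_def diag_colimit_def case_prod_unfold .
qed

lemma colim_obj: "colim \<in> Obj C"
  using cocone_obj[OF limiting_cocone_cocone[OF colim_limiting]] .

lemma colim_leg_hom: "g \<in> Field r \<Longrightarrow> colim_leg g \<in> Hom C (diag_obj g) colim"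
  using cocone_hom[OF limiting_cocone_cocone[OF colim_limiting]] .

lemma colim_leg_comm: "(b,g) \<in> r \<Longrightarrow> colim_leg g \<cdot> diag_map b g = colim_leg b"
  using cocone_comm[OF limiting_cocone_cocone[OF colim_limiting]] .

definition lifts :: "'i \<Rightarrow> 'i \<Rightarrow> 'i \<Rightarrow> 'm \<Rightarrow> bool" where
  "lifts i k g t \<longleftrightarrow> k \<in> Field r \<and> (i,g) \<in> r \<and> t \<in> Hom C (stage i k) (diag_obj g) \<and>
     a i g \<cdot> stage_leg i k = diag_leg g \<cdot> t"

lemma lifts_exists:
  assumes i: "i \<in> Field r" and k: "k \<in> Field r"
  shows "\<exists>g t. lifts i k g t"
proof -
  obtain g where g: "g \<in> Field r" "(i,g) \<in> r" "g \<noteq> i" "(k,g) \<in> r"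
    using infinite_card_strict_upper_bound[OF card_order infinite i k] by blast
  have "factors_through i k g (diag g)" using factors_through_diag[OF g(2) _ k] g by metis
  then show ?thesis unfolding factors_through_def lifts_def diag_obj_def diag_leg_def using g(2) k by blast
qed

lemma lifts_unique_le:
  assumes v: "lifts i k g t" and v': "lifts i k g' t'" and gg: "(g,g') \<in> r"
  shows "colim_leg g \<cdot> t = colim_leg g' \<cdot> t'"
proof -
  have t: "t \<in> Hom C (stage i k) (diag_obj g)" and ig: "(i,g) \<in> r" and k: "k \<in> Field r"
    and te: "a i g \<cdot> stage_leg i k = diag_leg g \<cdot> t"
    using v unfolding lifts_def by auto
  have t': "t' \<in> Hom C (stage i k) (diag_obj g')" and te': "a i g' \<cdot> stage_leg i k = diag_leg g' \<cdot> t'"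
    using v' unfolding lifts_def by auto
  have i: "i \<in> Field r" and g: "g \<in> Field r" and g': "g' \<in> Field r"
    using ig gg by (auto intro: FieldI1 FieldI2)
  have "diag_leg g' \<cdot> (diag_map g g' \<cdot> t) = a g g' \<cdot> (diag_leg g \<cdot> t)"
    using assoc[OF t diag_map_hom[OF gg] diag_leg_hom[OF g']] assoc[OF t diag_leg_hom[OF g] a_hom[OF gg]]
      diag_map_comm[OF gg] by simp
  also have "\<dots> = diag_leg g' \<cdot> t'"
    using te te' assoc[OF stage_leg_hom[OF i k] a_hom[OF ig] a_hom[OF gg]] a_comp[OF ig gg] by simp
  finally have "diag_map g g' \<cdot> t = t'"
    using diag_leg_cancel[OF g' comp_hom[OF t diag_map_hom[OF gg]] t'] by blast
  then show ?thesis
    using colim_leg_comm[OF gg] assoc[OF t diag_map_hom[OF gg] colim_leg_hom[OF g']] by simp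
qed

lemma lifts_unique:
  assumes v: "lifts i k g t" and v': "lifts i k g' t'"
  shows "colim_leg g \<cdot> t = colim_leg g' \<cdot> t'"
proof -
  have "g \<in> Field r" "g' \<in> Field r" using v v' unfolding lifts_def by (auto intro: FieldI2)
  then show ?thesis using r_total lifts_unique_le[OF v v'] lifts_unique_le[OF v' v] by metis
qed

lemma lifts_comp:
  assumes v: "lifts j k' g t" and s: "s \<in> Hom C (stage i k) (stage j k')" and ij: "(i,j) \<in> r"
    and se: "a i j \<cdot> stage_leg i k = stage_leg j k' \<cdot> s" and k: "k \<in> Field r"
  shows "lifts i k g (t \<cdot> s)"
proof -
  have t: "t \<in> Hom C (stage j k') (diag_obj g)" and jg: "(j,g) \<in> r" and k': "k' \<in> Field r"
    and te: "a j g \<cdot> stage_leg j k' = diag_leg g \<cdot> t"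
    using v unfolding lifts_def by auto
  have i: "i \<in> Field r" and j: "j \<in> Field r" and g: "g \<in> Field r"
    using ij jg by (auto intro: FieldI1 FieldI2)
  have "a i g \<cdot> stage_leg i k = a j g \<cdot> (a i j \<cdot> stage_leg i k)"
    using a_comp[OF ij jg] assoc[OF stage_leg_hom[OF i k] a_hom[OF ij] a_hom[OF jg]] by simp
  also have "\<dots> = diag_leg g \<cdot> (t \<cdot> s)"
    using se te assoc[OF s stage_leg_hom[OF j k'] a_hom[OF jg]] assoc[OF s t diag_leg_hom[OF g]] by simp
  finally show ?thesis unfolding lifts_def using k r_trans[OF ij jg] comp_hom[OF s t] by blast
qed

definition "stage_to_colim i k = (SOME v. \<exists>g t. lifts i k g t \<and> v = colim_leg g \<cdot> t)"

lemma stage_to_colim: "lifts i k g t \<Longrightarrow> stage_to_colim i k = colim_leg g \<cdot> t"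
  unfolding stage_to_colim_def by (rule someI2_ex) (blast, use lifts_unique in blast)

lemma stage_to_colim_hom:
  assumes i: "i \<in> Field r" and k: "k \<in> Field r"
  shows "stage_to_colim i k \<in> Hom C (stage i k) colim"
proof -
  obtain g t where v: "lifts i k g t" using lifts_exists[OF i k] by blast
  then have "t \<in> Hom C (stage i k) (diag_obj g)" "g \<in> Field r" unfolding lifts_def by (auto intro: FieldI2)
  then show ?thesis using stage_to_colim[OF v] comp_hom colim_leg_hom by metis
qed

lemma stage_to_colim_cocone: "i \<in> Field r \<Longrightarrow> cocone C r (stage i) (stage_map i) colim (stage_to_colim i)"
  unfolding cocone_def
proof (intro conjI ballI allI impI)
  show "colim \<in> Obj C" by (rule colim_obj)
next
  fix k assume "i \<in> Field r" "k \<in> Field r"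
  then show "stage_to_colim i k \<in> Hom C (stage i k) colim" by (rule stage_to_colim_hom)
next
  fix k l assume i: "i \<in> Field r" and kl: "(k,l) \<in> r"
  have k: "k \<in> Field r" and l: "l \<in> Field r" using kl by (auto intro: FieldI1 FieldI2)
  obtain g t where v: "lifts i l g t" using lifts_exists[OF i l] by blast
  have t: "t \<in> Hom C (stage i l) (diag_obj g)" and g: "g \<in> Field r"
    using v unfolding lifts_def by (auto intro: FieldI2)
  have "a i i \<cdot> stage_leg i k = stage_leg i l \<cdot> stage_map i k l"
    using a_id_comp[OF i stage_leg_hom[OF i k]] stage_leg_comm[OF i kl] by simp
  then have v2: "lifts i k g (t \<cdot> stage_map i k l)"
    using lifts_comp[OF v stage_map_hom[OF i kl] r_refl[OF i] _ k] by blast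
  show "stage_to_colim i l \<cdot> stage_map i k l = stage_to_colim i k"
    using stage_to_colim[OF v] stage_to_colim[OF v2] assoc[OF stage_map_hom[OF i kl] t colim_leg_hom[OF g]]
    by simp
qed

definition "colim_map i = (SOME h. h \<in> Hom C (X i) colim \<and> (\<forall>k \<in> Field r. h \<cdot> stage_leg i k = stage_to_colim i k))"

lemma colim_map:
  assumes i: "i \<in> Field r"
  shows "colim_map i \<in> Hom C (X i) colim \<and> (\<forall>k \<in> Field r. colim_map i \<cdot> stage_leg i k = stage_to_colim i k)"
  unfolding colim_map_def
  by (rule someI_ex) (use limiting_cocone_factor[OF stage_limiting[OF i] stage_to_colim_cocone[OF i]] in blast)

lemma colim_map_hom: "i \<in> Field r \<Longrightarrow> colim_map i \<in> Hom C (X i) colim"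
  using colim_map by blast

lemma colim_map_stage_leg: "i \<in> Field r \<Longrightarrow> k \<in> Field r \<Longrightarrow> colim_map i \<cdot> stage_leg i k = stage_to_colim i k"
  using colim_map by blast

lemma colim_map_lifts:
  assumes v: "lifts i k g t"
  shows "colim_map i \<cdot> stage_leg i k = colim_leg g \<cdot> t"
proof -
  have "i \<in> Field r" "k \<in> Field r" using v unfolding lifts_def by (auto intro: FieldI1)
  then show ?thesis using colim_map_stage_leg stage_to_colim[OF v] by simp
qed

lemma colim_map_comm:
  assumes ij: "(i,j) \<in> r"
  shows "colim_map j \<cdot> a i j = colim_map i"
proof -
  have i: "i \<in> Field r" and j: "j \<in> Field r" using ij by (auto intro: FieldI1 FieldI2)
  show ?thesis
  proof (rule limiting_cocone_eq[OF cat stage_chain[OF i] stage_limiting[OF i]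
        comp_hom[OF a_hom[OF ij] colim_map_hom[OF j]] colim_map_hom[OF i]])
    fix k assume k: "k \<in> Field r"
    obtain k' s where s: "k' \<in> Field r" "s \<in> Hom C (stage i k) (stage j k')"
      "a i j \<cdot> stage_leg i k = stage_leg j k' \<cdot> s"
      using factors_through_exists[OF ij k] unfolding factors_through_def by blast
    obtain g t where v: "lifts j k' g t" using lifts_exists[OF j s(1)] by blast
    have t: "t \<in> Hom C (stage j k') (diag_obj g)" and g: "g \<in> Field r"
      using v unfolding lifts_def by (auto intro: FieldI2)
    have "colim_map j \<cdot> a i j \<cdot> stage_leg i k = colim_map j \<cdot> stage_leg j k' \<cdot> s"
      using assoc[OF stage_leg_hom[OF i k] a_hom[OF ij] colim_map_hom[OF j]]
        assoc[OF s(2) stage_leg_hom[OF j s(1)] colim_map_hom[OF j]] s(3) by simp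
    also have "\<dots> = colim_leg g \<cdot> (t \<cdot> s)"
      using colim_map_lifts[OF v] assoc[OF s(2) t colim_leg_hom[OF g]] by simp
    also have "\<dots> = colim_map i \<cdot> stage_leg i k"
      using colim_map_lifts[OF lifts_comp[OF v s(2) ij s(3) k]] by simp
    finally show "colim_map j \<cdot> a i j \<cdot> stage_leg i k = colim_map i \<cdot> stage_leg i k" .
  qed
qed

lemma colim_map_cocone: "cocone C r X a colim colim_map"
  unfolding cocone_def using colim_obj colim_map_hom colim_map_comm by blast

lemma colim_leg_eq:
  assumes g: "g \<in> Field r"
  shows "colim_leg g = colim_map g \<cdot> diag_leg g"
proof -
  have "a g g \<cdot> diag_leg g = diag_leg g \<cdot> Id C (diag_obj g)"
    using a_id_comp[OF g diag_leg_hom[OF g]] category_comp_id[OF cat diag_leg_hom[OF g]] by simp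
  then have "lifts g (diag g) g (Id C (diag_obj g))"
    using diag_field[OF g] r_refl[OF g] diag_id_hom[OF g]
    unfolding lifts_def diag_leg_def diag_obj_def by blast
  from colim_map_lifts[OF this] show ?thesis
    using category_comp_id[OF cat colim_leg_hom[OF g]] unfolding diag_leg_def by simp
qed

lemma cocone_restrict_diag:
  assumes co: "cocone C r X a S f"
  shows "cocone C r diag_obj diag_map S (\<lambda>g. f g \<cdot> diag_leg g)"
  unfolding cocone_def
proof (intro conjI ballI allI impI)
  show "S \<in> Obj C" using cocone_obj[OF co] .
next
  fix g assume "g \<in> Field r"
  then show "f g \<cdot> diag_leg g \<in> Hom C (diag_obj g) S" using comp_hom[OF diag_leg_hom cocone_hom[OF co]] by blast
next
  fix b g assume bg: "(b,g) \<in> r"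
  have b: "b \<in> Field r" and g: "g \<in> Field r" using bg by (auto intro: FieldI1 FieldI2)
  have "f g \<cdot> diag_leg g \<cdot> diag_map b g = f g \<cdot> a b g \<cdot> diag_leg b"
    using assoc[OF diag_map_hom[OF bg] diag_leg_hom[OF g] cocone_hom[OF co g]]
      assoc[OF diag_leg_hom[OF b] a_hom[OF bg] cocone_hom[OF co g]] diag_map_comm[OF bg] by simp
  then show "f g \<cdot> diag_leg g \<cdot> diag_map b g = f b \<cdot> diag_leg b" using cocone_comm[OF co bg] by simp
qed

lemma colim_map_factor:
  assumes co: "cocone C r X a S f" and h: "h \<in> Hom C colim S"
    and h_leg: "\<And>g. g \<in> Field r \<Longrightarrow> h \<cdot> colim_leg g = f g \<cdot> diag_leg g"
    and i: "i \<in> Field r"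
  shows "h \<cdot> colim_map i = f i"
proof (rule limiting_cocone_eq[OF cat stage_chain[OF i] stage_limiting[OF i]
      comp_hom[OF colim_map_hom[OF i] h] cocone_hom[OF co i]])
  fix k assume k: "k \<in> Field r"
  obtain g t where v: "lifts i k g t" using lifts_exists[OF i k] by blast
  have t: "t \<in> Hom C (stage i k) (diag_obj g)" and g: "g \<in> Field r" and ig: "(i,g) \<in> r"
    and te: "a i g \<cdot> stage_leg i k = diag_leg g \<cdot> t"
    using v unfolding lifts_def by (auto intro: FieldI2)
  have "h \<cdot> colim_map i \<cdot> stage_leg i k = h \<cdot> colim_leg g \<cdot> t"
    using assoc[OF stage_leg_hom[OF i k] colim_map_hom[OF i] h]
      assoc[OF t colim_leg_hom[OF g] h] colim_map_lifts[OF v] by simp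
  also have "\<dots> = f g \<cdot> (a i g \<cdot> stage_leg i k)"
    using h_leg[OF g] assoc[OF t diag_leg_hom[OF g] cocone_hom[OF co g]] te by simp
  also have "\<dots> = f i \<cdot> stage_leg i k"
    using assoc[OF stage_leg_hom[OF i k] a_hom[OF ig] cocone_hom[OF co g]] cocone_comm[OF co ig] by simp
  finally show "h \<cdot> colim_map i \<cdot> stage_leg i k = f i \<cdot> stage_leg i k" .
qed

lemma colim_map_limiting: "limiting_cocone C r X a colim colim_map"
  unfolding limiting_cocone_def
proof (intro conjI allI impI)
  show "cocone C r X a colim colim_map" by (rule colim_map_cocone)
next
  fix S f assume co: "cocone C r X a S f"
  obtain h where h: "h \<in> Hom C colim S" "\<And>g. g \<in> Field r \<Longrightarrow> h \<cdot> colim_leg g = f g \<cdot> diag_leg g"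
    using limiting_cocone_factor[OF colim_limiting cocone_restrict_diag[OF co]] by blast
  show "\<exists>!h. h \<in> Hom C colim S \<and> (\<forall>i \<in> Field r. h \<cdot> colim_map i = f i)"
  proof (rule ex1I[of _ h])
    show "h \<in> Hom C colim S \<and> (\<forall>i \<in> Field r. h \<cdot> colim_map i = f i)"
      using h colim_map_factor[OF co h] by blast
  next
    fix h' assume "h' \<in> Hom C colim S \<and> (\<forall>i \<in> Field r. h' \<cdot> colim_map i = f i)"
    then have h'_hom: "h' \<in> Hom C colim S" and h'_comm: "\<And>i. i \<in> Field r \<Longrightarrow> h' \<cdot> colim_map i = f i"
      by auto
    show "h' = h"
    proof (rule limiting_cocone_eq[OF cat diag_chain colim_limiting h'_hom h(1)])
      fix g assume g: "g \<in> Field r"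
      have "h' \<cdot> colim_leg g = h' \<cdot> colim_map g \<cdot> diag_leg g"
        using colim_leg_eq[OF g] assoc[OF diag_leg_hom[OF g] colim_map_hom[OF g] h'_hom] by simp
      then show "h' \<cdot> colim_leg g = h \<cdot> colim_leg g" using h'_comm[OF g] h(2)[OF g] by simp
    qed
  qed
qed

end

theorem semi_algebroidal_chain_has_colimit:
  assumes "regular_cardinal r" "category C" "all_mono C" "semi_algebroidal C r" "chain C r X a"
  shows "\<exists>L l. limiting_cocone C r X a L l"
proof -
  interpret chain_in_semi_algebroidal r C X a using assms by unfold_locales
  show ?thesis using colim_map_limiting by blast
qed

section \<open>Small objects of the comma category\<close>

lemma comma_Obj:
  "(X,u,Y) \<in> Obj (comma A B C Fo Fm Go Gm) \<longleftrightarrow> X \<in> Obj A \<and> Y \<in> Obj B \<and> u \<in> Hom C (Fo X) (Go Y)"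
  by (simp add: comma_def)

lemma comma_Hom:
  "m \<in> Hom (comma A B C Fo Fm Go Gm) (X,u,Y) (X',u',Y') \<longleftrightarrow>
   (\<exists>a b. m = ((X,u,Y),(a,b),(X',u',Y')) \<and> X \<in> Obj A \<and> Y \<in> Obj B \<and> u \<in> Hom C (Fo X) (Go Y) \<and>
     X' \<in> Obj A \<and> Y' \<in> Obj B \<and> u' \<in> Hom C (Fo X') (Go Y') \<and>
     a \<in> Hom A X X' \<and> b \<in> Hom B Y Y' \<and> Comp C u' (Fm a) = Comp C (Gm b) u)"
  by (simp add: comma_def)

lemma comma_Comp:
  "Comp (comma A B C Fo Fm Go Gm) (S',(a',b'),T') (S,(a,b),T) = (S,(Comp A a' a, Comp B b' b),T')"
  by (simp add: comma_def)

definition comma_arr_fst :: "'x \<times> ('a \<times> 'b) \<times> 'y \<Rightarrow> 'a" where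
  "comma_arr_fst m = fst (fst (snd m))"

definition comma_arr_snd :: "'x \<times> ('a \<times> 'b) \<times> 'y \<Rightarrow> 'b" where
  "comma_arr_snd m = snd (fst (snd m))"

lemma comma_ObjD:
  "P \<in> Obj (comma A B C Fo Fm Go Gm) \<Longrightarrow>
   fst P \<in> Obj A \<and> snd (snd P) \<in> Obj B \<and> fst (snd P) \<in> Hom C (Fo (fst P)) (Go (snd (snd P)))"
  by (cases P) (simp add: comma_Obj)

lemma comma_HomD:
  "m \<in> Hom (comma A B C Fo Fm Go Gm) P Q \<Longrightarrow>
   m = (P, (comma_arr_fst m, comma_arr_snd m), Q) \<and>
   comma_arr_fst m \<in> Hom A (fst P) (fst Q) \<and> comma_arr_snd m \<in> Hom B (snd (snd P)) (snd (snd Q)) \<and>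
   Comp C (fst (snd Q)) (Fm (comma_arr_fst m)) = Comp C (Gm (comma_arr_snd m)) (fst (snd P))"
  by (cases P; cases Q) (auto simp: comma_Hom comma_arr_fst_def comma_arr_snd_def)

lemma comma_arr_fst_Id: "comma_arr_fst (Id (comma A B C Fo Fm Go Gm) P) = Id A (fst P)"
  by (cases P) (simp add: comma_def comma_arr_fst_def)

lemma comma_arr_snd_Id: "comma_arr_snd (Id (comma A B C Fo Fm Go Gm) P) = Id B (snd (snd P))"
  by (cases P) (simp add: comma_def comma_arr_snd_def)

lemma comma_arr_fst_Comp:
  "comma_arr_fst (Comp (comma A B C Fo Fm Go Gm) m' m) = Comp A (comma_arr_fst m') (comma_arr_fst m)"
  by (simp add: comma_def comma_arr_fst_def case_prod_beta)

lemma comma_arr_snd_Comp: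
  "comma_arr_snd (Comp (comma A B C Fo Fm Go Gm) m' m) = Comp B (comma_arr_snd m') (comma_arr_snd m)"
  by (simp add: comma_def comma_arr_snd_def case_prod_beta)

locale comma_functors =
  fixes A :: "('oa,'ma) category" and B :: "('ob,'mb) category" and C :: "('oc,'mc) category"
    and Fo :: "'oa \<Rightarrow> 'oc" and Fm :: "'ma \<Rightarrow> 'mc" and Go :: "'ob \<Rightarrow> 'oc" and Gm :: "'mb \<Rightarrow> 'mc"
  assumes catA: "category A" and catB: "category B" and catC: "category C"
    and F: "is_functor A C Fo Fm" and G: "is_functor B C Go Gm"
begin

abbreviation "K \<equiv> comma A B C Fo Fm Go Gm"

abbreviation compC (infixl "\<cdot>" 70) where "g \<cdot> f \<equiv> Comp C g f"

lemma assocC: "f \<in> Hom C X Y \<Longrightarrow> g \<in> Hom C Y Z \<Longrightarrow> h \<in> Hom C Z W \<Longrightarrow> h \<cdot> (g \<cdot> f) = h \<cdot> g \<cdot> f"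
  using category_assoc[OF catC] by blast

lemma comma_chain_fst:
  assumes ch: "chain K s Ho Hm"
  shows "chain A s (\<lambda>i. fst (Ho i)) (\<lambda>i j. comma_arr_fst (Hm i j))"
  unfolding chain_def
proof (intro conjI allI impI ballI)
  show "Well_order s" using chain_well_order[OF ch] .
next
  fix i assume "i \<in> Field s" then show "fst (Ho i) \<in> Obj A" using comma_ObjD chain_obj[OF ch] by blast
next
  fix i j assume "(i,j) \<in> s"
  then show "comma_arr_fst (Hm i j) \<in> Hom A (fst (Ho i)) (fst (Ho j))"
    using comma_HomD chain_hom[OF ch] by blast
next
  fix i assume "i \<in> Field s"
  then show "comma_arr_fst (Hm i i) = Id A (fst (Ho i))" using chain_id[OF ch] comma_arr_fst_Id by metis
next
  fix i j k assume "(i,j) \<in> s \<and> (j,k) \<in> s"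
  then show "Comp A (comma_arr_fst (Hm j k)) (comma_arr_fst (Hm i j)) = comma_arr_fst (Hm i k)"
    using chain_comp[OF ch] comma_arr_fst_Comp by metis
qed

lemma comma_chain_snd:
  assumes ch: "chain K s Ho Hm"
  shows "chain B s (\<lambda>i. snd (snd (Ho i))) (\<lambda>i j. comma_arr_snd (Hm i j))"
  unfolding chain_def
proof (intro conjI allI impI ballI)
  show "Well_order s" using chain_well_order[OF ch] .
next
  fix i assume "i \<in> Field s" then show "snd (snd (Ho i)) \<in> Obj B" using comma_ObjD chain_obj[OF ch] by blast
next
  fix i j assume "(i,j) \<in> s"
  then show "comma_arr_snd (Hm i j) \<in> Hom B (snd (snd (Ho i))) (snd (snd (Ho j)))"
    using comma_HomD chain_hom[OF ch] by blast
next
  fix i assume "i \<in> Field s"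
  then show "comma_arr_snd (Hm i i) = Id B (snd (snd (Ho i)))" using chain_id[OF ch] comma_arr_snd_Id by metis
next
  fix i j k assume "(i,j) \<in> s \<and> (j,k) \<in> s"
  then show "Comp B (comma_arr_snd (Hm j k)) (comma_arr_snd (Hm i j)) = comma_arr_snd (Hm i k)"
    using chain_comp[OF ch] comma_arr_snd_Comp by metis
qed

lemma comma_cocone_fst:
  assumes co: "cocone K s Ho Hm S f"
  shows "cocone A s (\<lambda>i. fst (Ho i)) (\<lambda>i j. comma_arr_fst (Hm i j)) (fst S) (\<lambda>i. comma_arr_fst (f i))"
  unfolding cocone_def
  using comma_ObjD[OF cocone_obj[OF co]] comma_HomD[OF cocone_hom[OF co]]
    cocone_comm[OF co] comma_arr_fst_Comp by metis

lemma comma_cocone_snd: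
  assumes co: "cocone K s Ho Hm S f"
  shows "cocone B s (\<lambda>i. snd (snd (Ho i))) (\<lambda>i j. comma_arr_snd (Hm i j)) (snd (snd S)) (\<lambda>i. comma_arr_snd (f i))"
  unfolding cocone_def
  using comma_ObjD[OF cocone_obj[OF co]] comma_HomD[OF cocone_hom[OF co]]
    cocone_comm[OF co] comma_arr_snd_Comp by metis

lemma comma_hom_cancel:
  assumes m: "m \<in> Hom K P Q"
    and xy: "((X0,c,Y0), (Comp A (comma_arr_fst m) x, Comp B (comma_arr_snd m) y), Q) \<in> Hom K (X0,c,Y0) Q"
    and x: "x \<in> Hom A X0 (fst P)" and y: "y \<in> Hom B Y0 (snd (snd P))"
    and mono: "is_mono C (Gm (comma_arr_snd m))"
  shows "((X0,c,Y0), (x,y), P) \<in> Hom K (X0,c,Y0) P"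
proof -
  obtain X u Y where P: "P = (X,u,Y)" by (cases P)
  obtain X' u' Y' where Q: "Q = (X',u',Y')" by (cases Q)
  let ?a = "comma_arr_fst m" and ?b = "comma_arr_snd m"
  have a: "?a \<in> Hom A X X'" and b: "?b \<in> Hom B Y Y'" and ab: "u' \<cdot> Fm ?a = Gm ?b \<cdot> u"
    using comma_HomD[OF m] unfolding P Q by auto
  have u: "u \<in> Hom C (Fo X) (Go Y)" and u': "u' \<in> Hom C (Fo X') (Go Y')" and objs: "X \<in> Obj A" "Y \<in> Obj B"
    using m unfolding P Q comma_Hom by auto
  have c: "c \<in> Hom C (Fo X0) (Go Y0)" and objs0: "X0 \<in> Obj A" "Y0 \<in> Obj B"
    and axy: "u' \<cdot> Fm (Comp A ?a x) = Gm (Comp B ?b y) \<cdot> c"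
    using xy unfolding Q comma_Hom by auto
  have x': "x \<in> Hom A X0 X" and y': "y \<in> Hom B Y0 Y" using x y unfolding P by auto
  note Fx = functor_hom[OF F x'] and Gy = functor_hom[OF G y'] and Gb = functor_hom[OF G b]
  have "Gm ?b \<cdot> (u \<cdot> Fm x) = u' \<cdot> Fm ?a \<cdot> Fm x"
    using assocC[OF Fx u Gb] ab by simp
  also have "\<dots> = u' \<cdot> Fm (Comp A ?a x)"
    using assocC[OF Fx functor_hom[OF F a] u'] functor_comp[OF F x' a] by simp
  also have "\<dots> = Gm ?b \<cdot> (Gm y \<cdot> c)"
    using axy functor_comp[OF G y' b] assocC[OF c Gy Gb] by simp
  finally have "u \<cdot> Fm x = Gm y \<cdot> c"
    by (rule is_mono_cancel[OF mono Gb category_comp_hom[OF catC Fx u] category_comp_hom[OF catC c Gy]])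
  then show ?thesis unfolding P comma_Hom using objs objs0 u c x' y' by blast
qed

lemma comma_cocone_of_components:
  assumes ch: "chain K s Ho Hm"
    and FL: "limiting_cocone C s (\<lambda>i. Fo (fst (Ho i))) (\<lambda>i j. Fm (comma_arr_fst (Hm i j))) (Fo L) (\<lambda>i. Fm (l i))"
    and L: "cocone A s (\<lambda>i. fst (Ho i)) (\<lambda>i j. comma_arr_fst (Hm i j)) L l"
    and M: "cocone B s (\<lambda>i. snd (snd (Ho i))) (\<lambda>i j. comma_arr_snd (Hm i j)) M m"
  shows "\<exists>c \<in> Hom C (Fo L) (Go M). cocone K s Ho Hm (L,c,M) (\<lambda>i. (Ho i, (l i, m i), (L,c,M)))"
proof -
  let ?u = "\<lambda>i. fst (snd (Ho i))"
  have u: "?u i \<in> Hom C (Fo (fst (Ho i))) (Go (snd (snd (Ho i))))" if "i \<in> Field s" for i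
    using comma_ObjD chain_obj[OF ch that] by blast
  have Gm: "Gm (m i) \<in> Hom C (Go (snd (snd (Ho i)))) (Go M)" if "i \<in> Field s" for i
    using functor_hom[OF G cocone_hom[OF M that]] .
  have "cocone C s (\<lambda>i. Fo (fst (Ho i))) (\<lambda>i j. Fm (comma_arr_fst (Hm i j))) (Go M) (\<lambda>i. Gm (m i) \<cdot> ?u i)"
    unfolding cocone_def
  proof (intro conjI allI impI ballI)
    show "Go M \<in> Obj C" using functor_obj[OF G cocone_obj[OF M]] .
  next
    fix i assume "i \<in> Field s"
    then show "Gm (m i) \<cdot> ?u i \<in> Hom C (Fo (fst (Ho i))) (Go M)" using category_comp_hom[OF catC u Gm] by blast
  next
    fix i j assume ij: "(i,j) \<in> s"
    have i: "i \<in> Field s" and j: "j \<in> Field s" using ij by (auto intro: FieldI1 FieldI2)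
    have H: "comma_arr_fst (Hm i j) \<in> Hom A (fst (Ho i)) (fst (Ho j))"
        "comma_arr_snd (Hm i j) \<in> Hom B (snd (snd (Ho i))) (snd (snd (Ho j)))"
        "?u j \<cdot> Fm (comma_arr_fst (Hm i j)) = Gm (comma_arr_snd (Hm i j)) \<cdot> ?u i"
      using comma_HomD[OF chain_hom[OF ch ij]] by auto
    have "Gm (m j) \<cdot> ?u j \<cdot> Fm (comma_arr_fst (Hm i j)) = Gm (m j) \<cdot> Gm (comma_arr_snd (Hm i j)) \<cdot> ?u i"
      using assocC[OF functor_hom[OF F H(1)] u[OF j] Gm[OF j]] H(3)
        assocC[OF u[OF i] functor_hom[OF G H(2)] Gm[OF j]] by simp
    also have "\<dots> = Gm (m i) \<cdot> ?u i"
      using functor_comp[OF G H(2) cocone_hom[OF M j]] cocone_comm[OF M ij] by simp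
    finally show "Gm (m j) \<cdot> ?u j \<cdot> Fm (comma_arr_fst (Hm i j)) = Gm (m i) \<cdot> ?u i" .
  qed
  then obtain c where c: "c \<in> Hom C (Fo L) (Go M)" "\<And>i. i \<in> Field s \<Longrightarrow> c \<cdot> Fm (l i) = Gm (m i) \<cdot> ?u i"
    using limiting_cocone_factor[OF FL] by blast
  have "cocone K s Ho Hm (L,c,M) (\<lambda>i. (Ho i, (l i, m i), (L,c,M)))"
    unfolding cocone_def
  proof (intro conjI allI impI ballI)
    show "(L,c,M) \<in> Obj K" using cocone_obj[OF L] cocone_obj[OF M] c(1) by (simp add: comma_Obj)
  next
    fix i assume i: "i \<in> Field s"
    obtain X u Y where Ho: "Ho i = (X,u,Y)" by (cases "Ho i")
    show "(Ho i, (l i, m i), (L,c,M)) \<in> Hom K (Ho i) (L,c,M)"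
      using chain_obj[OF ch i] cocone_obj[OF L] cocone_obj[OF M] c(1) c(2)[OF i]
        cocone_hom[OF L i] cocone_hom[OF M i]
      unfolding Ho comma_Hom comma_Obj by simp
  next
    fix i j assume ij: "(i,j) \<in> s"
    have "Hm i j = (Ho i, (comma_arr_fst (Hm i j), comma_arr_snd (Hm i j)), Ho j)"
      using comma_HomD[OF chain_hom[OF ch ij]] by blast
    then show "Comp K (Ho j, (l j, m j), L, c, M) (Hm i j) = (Ho i, (l i, m i), L, c, M)"
      using cocone_comm[OF L ij] cocone_comm[OF M ij] by (metis comma_Comp)
  qed
  with c(1) show ?thesis by blast
qed

lemma comma_colimit_components:
  assumes reg: "regular_cardinal r" and monoA: "all_mono A" and monoB: "all_mono B"
    and saA: "semi_algebroidal A r" and saB: "semi_algebroidal B r"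
    and F_cocont: "cocontinuous A C Fo Fm r"
    and ch: "chain K r Ho Hm" and lim: "limiting_cocone K r Ho Hm S f"
  obtains L l \<alpha> M m \<beta> where
    "limiting_cocone A r (\<lambda>i. fst (Ho i)) (\<lambda>i j. comma_arr_fst (Hm i j)) L l"
    "\<alpha> \<in> Hom A (fst S) L" "\<And>i. i \<in> Field r \<Longrightarrow> Comp A \<alpha> (comma_arr_fst (f i)) = l i"
    "limiting_cocone B r (\<lambda>i. snd (snd (Ho i))) (\<lambda>i j. comma_arr_snd (Hm i j)) M m"
    "\<beta> \<in> Hom B (snd (snd S)) M" "\<And>i. i \<in> Field r \<Longrightarrow> Comp B \<beta> (comma_arr_snd (f i)) = m i"
proof -
  note chA = comma_chain_fst[OF ch] and chB = comma_chain_snd[OF ch]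
  obtain L l where limA: "limiting_cocone A r (\<lambda>i. fst (Ho i)) (\<lambda>i j. comma_arr_fst (Hm i j)) L l"
    using semi_algebroidal_chain_has_colimit[OF reg catA monoA saA chA] by blast
  obtain M m where limB: "limiting_cocone B r (\<lambda>i. snd (snd (Ho i))) (\<lambda>i j. comma_arr_snd (Hm i j)) M m"
    using semi_algebroidal_chain_has_colimit[OF reg catB monoB saB chB] by blast
  have "limiting_cocone C r (\<lambda>i. Fo (fst (Ho i))) (\<lambda>i j. Fm (comma_arr_fst (Hm i j))) (Fo L) (\<lambda>i. Fm (l i))"
    using F_cocont chA limA unfolding cocontinuous_def preserves_colimits_of_def by blast
  then obtain c where "cocone K r Ho Hm (L,c,M) (\<lambda>i. (Ho i, (l i, m i), (L,c,M)))"
    using comma_cocone_of_components[OF ch _ limiting_cocone_cocone[OF limA] limiting_cocone_cocone[OF limB]]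
    by blast
  then obtain \<theta> where \<theta>: "\<theta> \<in> Hom K S (L,c,M)"
      "\<And>i. i \<in> Field r \<Longrightarrow> Comp K \<theta> (f i) = (Ho i, (l i, m i), (L,c,M))"
    using limiting_cocone_factor[OF lim] by blast
  have \<alpha>: "Comp A (comma_arr_fst \<theta>) (comma_arr_fst (f i)) = l i"
    and \<beta>: "Comp B (comma_arr_snd \<theta>) (comma_arr_snd (f i)) = m i" if "i \<in> Field r" for i
    using arg_cong[OF \<theta>(2)[OF that], of comma_arr_fst] arg_cong[OF \<theta>(2)[OF that], of comma_arr_snd]
    unfolding comma_arr_fst_Comp comma_arr_snd_Comp by (simp_all add: comma_arr_fst_def comma_arr_snd_def)
  have "comma_arr_fst \<theta> \<in> Hom A (fst S) L" "comma_arr_snd \<theta> \<in> Hom B (snd (snd S)) M"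
    using comma_HomD[OF \<theta>(1)] by auto
  from that[OF limA this(1) \<alpha> limB this(2) \<beta>] show ?thesis .
qed

lemma small_comma_obj:
  assumes reg: "regular_cardinal r" and monoA: "all_mono A" and monoB: "all_mono B"
    and saA: "semi_algebroidal A r" and saB: "semi_algebroidal B r"
    and F_cocont: "cocontinuous A C Fo Fm r" and G_mono: "preserves_monos B C Gm"
    and X0: "small A r X0" and Y0: "small B r Y0" and c: "c \<in> Hom C (Fo X0) (Go Y0)"
  shows "small K r (X0, c, Y0)"
  unfolding small_def
proof (intro conjI allI impI)
  show "(X0, c, Y0) \<in> Obj K" using small_obj[OF X0] small_obj[OF Y0] c by (simp add: comma_Obj)
next
  fix Ho Hm S f h
  assume "chain K r Ho Hm \<and> limiting_cocone K r Ho Hm S f \<and> h \<in> Hom K (X0, c, Y0) S"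
  then have ch: "chain K r Ho Hm" and lim: "limiting_cocone K r Ho Hm S f"
    and h: "h \<in> Hom K (X0, c, Y0) S" by auto
  have co: "cocone K r Ho Hm S f" using limiting_cocone_cocone[OF lim] .
  note chA = comma_chain_fst[OF ch] and chB = comma_chain_snd[OF ch]
  note coA = comma_cocone_fst[OF co] and coB = comma_cocone_snd[OF co]
  let ?x = "comma_arr_fst h" and ?y = "comma_arr_snd h"
  have hD: "h = ((X0,c,Y0), (?x,?y), S)" "?x \<in> Hom A X0 (fst S)" "?y \<in> Hom B Y0 (snd (snd S))"
    using comma_HomD[OF h] by auto
  obtain L l \<alpha> M m \<beta> where limA: "limiting_cocone A r (\<lambda>i. fst (Ho i)) (\<lambda>i j. comma_arr_fst (Hm i j)) L l"
    and \<alpha>: "\<alpha> \<in> Hom A (fst S) L" "\<And>i. i \<in> Field r \<Longrightarrow> Comp A \<alpha> (comma_arr_fst (f i)) = l i"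
    and limB: "limiting_cocone B r (\<lambda>i. snd (snd (Ho i))) (\<lambda>i j. comma_arr_snd (Hm i j)) M m"
    and \<beta>: "\<beta> \<in> Hom B (snd (snd S)) M" "\<And>i. i \<in> Field r \<Longrightarrow> Comp B \<beta> (comma_arr_snd (f i)) = m i"
    by (rule comma_colimit_components[OF reg monoA monoB saA saB F_cocont ch lim]) (rule that)
  obtain j1 x1 where j1: "j1 \<in> Field r" and x1: "x1 \<in> Hom A X0 (fst (Ho j1))"
    and x: "?x = Comp A (comma_arr_fst (f j1)) x1"
    using small_factor_through_cocone[OF catA monoA X0 chA limA coA \<alpha> hD(2)] by blast
  obtain j2 y1 where j2: "j2 \<in> Field r" and y1: "y1 \<in> Hom B Y0 (snd (snd (Ho j2)))"
    and y: "?y = Comp B (comma_arr_snd (f j2)) y1"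
    using small_factor_through_cocone[OF catB monoB Y0 chB limB coB \<beta> hD(3)] by blast
  obtain j where j: "j \<in> Field r" "(j1,j) \<in> r" "(j2,j) \<in> r"
    using chain_upper_bound[OF chA j1 j2] by blast
  let ?x' = "Comp A (comma_arr_fst (Hm j1 j)) x1" and ?y' = "Comp B (comma_arr_snd (Hm j2 j)) y1"
  have x': "?x' \<in> Hom A X0 (fst (Ho j))" "Comp A (comma_arr_fst (f j)) ?x' = ?x"
    using cocone_factor_shift[OF catA chA coA j(2) x1] x by simp_all
  have y': "?y' \<in> Hom B Y0 (snd (snd (Ho j)))" "Comp B (comma_arr_snd (f j)) ?y' = ?y"
    using cocone_factor_shift[OF catB chB coB j(3) y1] y by simp_all
  have fj: "f j \<in> Hom K (Ho j) S" using cocone_hom[OF co j(1)] .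
  have "is_mono C (Gm (comma_arr_snd (f j)))"
    using preserves_monos_all_mono[OF G_mono monoB] comma_HomD[OF fj] by blast
  then have g: "((X0,c,Y0), (?x', ?y'), Ho j) \<in> Hom K (X0,c,Y0) (Ho j)"
    using comma_hom_cancel[OF fj _ x'(1) y'(1)] h hD(1) x'(2) y'(2) by simp
  have "h = Comp K (f j) ((X0,c,Y0), (?x', ?y'), Ho j)"
    using comma_HomD[OF fj] hD(1) x'(2) y'(2) by (metis comma_Comp)
  with g j(1) show "\<exists>j \<in> Field r. \<exists>g \<in> Hom K (X0, c, Y0) (Ho j). h = Comp K (f j) g" by blast
qed

section \<open>Saturation and mixed amalgamation\<close>

lemma universal_comma_hom:
  assumes univ: "universal K (\<lambda>P. P \<in> Obj K) (U, u, T)" and P: "(X, c, Y) \<in> Obj K"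
  obtains x t where "x \<in> Hom A X U" "t \<in> Hom B Y T" "u \<cdot> Fm x = Gm t \<cdot> c"
proof -
  obtain m where "m \<in> Hom K (X, c, Y) (U, u, T)" using univ P unfolding universal_def by blast
  then show ?thesis using that unfolding comma_Hom by blast
qed

lemma saturated_imp_mixed_amalgamation:
  assumes monoB: "all_mono B" and G_mono: "preserves_monos B C Gm" and saB: "semi_algebroidal B r"
    and F_pres_small: "preserves_smallness_wrt A B C Fo Go Gm r"
    and univ: "universal K (\<lambda>P. P \<in> Obj K) (U, u, T)"
    and sat: "saturated A (small A r) U"
  shows "mixed_amalgamation A B C Fo Fm Go Gm (small A r) (small B r)"
  unfolding mixed_amalgamation_def
proof (intro allI impI)
  have u: "u \<in> Hom C (Fo U) (Go T)" and T: "T \<in> Obj B"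
    using univ unfolding universal_def by (simp_all add: comma_Obj)
  obtain H M p where ch: "chain B r H M" and H: "\<And>i. i \<in> Field r \<Longrightarrow> small B r (H i)"
    and lim: "limiting_cocone B r H M T p"
    using semi_algebroidal_presentation[OF saB T] by blast
  have co: "cocone B r H M T p" using limiting_cocone_cocone[OF lim] .
  note chG = functor_chain[OF G ch] and coG = functor_cocone[OF G ch co]
  fix X Y T1 g a0
  assume "small A r X \<and> small A r Y \<and> small B r T1 \<and> g \<in> Hom A X Y \<and> a0 \<in> Hom C (Fo X) (Go T1)"
  then have X: "small A r X" and Y: "small A r Y" and T1: "small B r T1"
    and g: "g \<in> Hom A X Y" and a0: "a0 \<in> Hom C (Fo X) (Go T1)" by auto
  obtain x t where x: "x \<in> Hom A X U" and t: "t \<in> Hom B T1 T" and xt: "u \<cdot> Fm x = Gm t \<cdot> a0"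
    using universal_comma_hom[OF univ] small_obj[OF X] small_obj[OF T1] a0 by (metis comma_Obj)
  obtain h where h: "h \<in> Hom A Y U" "Comp A h g = x" using sat X Y x g unfolding saturated_def by blast
  have uh: "u \<cdot> Fm h \<in> Hom C (Fo Y) (Go T)" using category_comp_hom[OF catC functor_hom[OF F h(1)] u] .
  obtain j1 b1 where j1: "j1 \<in> Field r" and b1: "b1 \<in> Hom C (Fo Y) (Go (H j1))" "Gm (p j1) \<cdot> b1 = u \<cdot> Fm h"
    using F_pres_small ch lim Y uh unfolding preserves_smallness_wrt_def by blast
  obtain j2 t1 where j2: "j2 \<in> Field r" and t1: "t1 \<in> Hom B T1 (H j2)" "t = Comp B (p j2) t1"
    using small_factor[OF T1 ch lim t] by blast
  obtain j where j: "j \<in> Field r" "(j1,j) \<in> r" "(j2,j) \<in> r" using chain_upper_bound[OF ch j1 j2] by blast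
  let ?b = "Gm (M j1 j) \<cdot> b1" and ?h = "Comp B (M j2 j) t1"
  have b: "?b \<in> Hom C (Fo Y) (Go (H j))" "Gm (p j) \<cdot> ?b = u \<cdot> Fm h"
    using cocone_factor_shift[OF catC chG coG j(2) b1(1)] b1(2) by simp_all
  have hh: "?h \<in> Hom B T1 (H j)" "Comp B (p j) ?h = t"
    using cocone_factor_shift[OF catB ch co j(3) t1(1)] t1(2) by simp_all
  have pj: "Gm (p j) \<in> Hom C (Go (H j)) (Go T)" using functor_hom[OF G cocone_hom[OF co j(1)]] .
  note Fg = functor_hom[OF F g] and Gh = functor_hom[OF G hh(1)]
  have "Gm (p j) \<cdot> (?b \<cdot> Fm g) = u \<cdot> Fm h \<cdot> Fm g"
    using assocC[OF Fg b(1) pj] b(2) by simp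
  also have "\<dots> = Gm t \<cdot> a0"
    using assocC[OF Fg functor_hom[OF F h(1)] u] functor_comp[OF F g h(1)] h(2) xt by simp
  also have "\<dots> = Gm (p j) \<cdot> (Gm ?h \<cdot> a0)"
    using assocC[OF a0 Gh pj] functor_comp[OF G hh(1) cocone_hom[OF co j(1)]] hh(2) by simp
  finally have "?b \<cdot> Fm g = Gm ?h \<cdot> a0"
    using is_mono_cancel[OF preserves_monos_all_mono[OF G_mono monoB cocone_hom[OF co j(1)]] pj
        category_comp_hom[OF catC Fg b(1)] category_comp_hom[OF catC a0 Gh]] by blast
  then show "\<exists>T2 h b. small B r T2 \<and> h \<in> Hom B T1 T2 \<and> b \<in> Hom C (Fo Y) (Go T2) \<and>
      b \<cdot> Fm g = Gm h \<cdot> a0"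
    using H[OF j(1)] hh(1) b(1) by blast
qed

lemma homogeneous_arr_fst:
  assumes homog: "homogeneous K (small K r) V" and P: "small K r P"
    and m: "m \<in> Hom K P V" and m': "m' \<in> Hom K P V"
  obtains s where "s \<in> Hom A (fst V) (fst V)" "Comp A s (comma_arr_fst m) = comma_arr_fst m'"
proof -
  obtain \<sigma> where \<sigma>: "automorphism K V \<sigma>" "Comp K \<sigma> m = m'"
    using homog P m m' unfolding homogeneous_def by blast
  have "comma_arr_fst \<sigma> \<in> Hom A (fst V) (fst V)"
    using comma_HomD \<sigma>(1) unfolding automorphism_def by blast
  moreover have "Comp A (comma_arr_fst \<sigma>) (comma_arr_fst m) = comma_arr_fst m'"
    using \<sigma>(2) comma_arr_fst_Comp by metis
  ultimately show ?thesis using that by blast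
qed

lemma mixed_amalgamation_imp_saturated:
  assumes saB: "semi_algebroidal B r" and F_pres_small: "preserves_smallness_wrt A B C Fo Go Gm r"
    and univ: "universal K (\<lambda>P. P \<in> Obj K) (U, u, T)"
    and homog: "homogeneous K (small K r) (U, u, T)"
    and small_comma: "\<And>X Y c. small A r X \<Longrightarrow> small B r Y \<Longrightarrow> c \<in> Hom C (Fo X) (Go Y) \<Longrightarrow>
      small K r (X, c, Y)"
    and mix: "mixed_amalgamation A B C Fo Fm Go Gm (small A r) (small B r)"
  shows "saturated A (small A r) U"
  unfolding saturated_def
proof (intro allI impI)
  have u: "u \<in> Hom C (Fo U) (Go T)" and U: "U \<in> Obj A" and T: "T \<in> Obj B"
    using univ unfolding universal_def by (simp_all add: comma_Obj)
  obtain H M p where ch: "chain B r H M" and H: "\<And>i. i \<in> Field r \<Longrightarrow> small B r (H i)"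
    and lim: "limiting_cocone B r H M T p"
    using semi_algebroidal_presentation[OF saB T] by blast
  have co: "cocone B r H M T p" using limiting_cocone_cocone[OF lim] .
  fix X Y f g
  assume "small A r X \<and> small A r Y \<and> f \<in> Hom A X U \<and> g \<in> Hom A X Y"
  then have X: "small A r X" and Y: "small A r Y" and f: "f \<in> Hom A X U" and g: "g \<in> Hom A X Y" by auto
  have "u \<cdot> Fm f \<in> Hom C (Fo X) (Go T)" using category_comp_hom[OF catC functor_hom[OF F f] u] .
  then obtain j c where j: "j \<in> Field r" and c: "c \<in> Hom C (Fo X) (Go (H j))" "Gm (p j) \<cdot> c = u \<cdot> Fm f"
    using F_pres_small ch lim X unfolding preserves_smallness_wrt_def by blast
  obtain T2 k b where T2: "small B r T2" and k: "k \<in> Hom B (H j) T2" and b: "b \<in> Hom C (Fo Y) (Go T2)"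
    and bk: "b \<cdot> Fm g = Gm k \<cdot> c"
    using mix X Y H[OF j] g c(1) unfolding mixed_amalgamation_def by blast
  obtain y t where y: "y \<in> Hom A Y U" and t: "t \<in> Hom B T2 T" and yt: "u \<cdot> Fm y = Gm t \<cdot> b"
    using universal_comma_hom[OF univ] small_obj[OF Y] small_obj[OF T2] b by (metis comma_Obj)
  have "u \<cdot> Fm (Comp A y g) = Gm t \<cdot> b \<cdot> Fm g"
    using functor_comp[OF F g y] assocC[OF functor_hom[OF F g] functor_hom[OF F y] u] yt by simp
  also have "\<dots> = Gm (Comp B t k) \<cdot> c"
    using assocC[OF functor_hom[OF F g] b functor_hom[OF G t]] bk
      assocC[OF c(1) functor_hom[OF G k] functor_hom[OF G t]] functor_comp[OF G k t] by simp
  finally have m1: "((X, c, H j), (Comp A y g, Comp B t k), (U, u, T)) \<in> Hom K (X, c, H j) (U, u, T)"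
    unfolding comma_Hom
    using small_obj[OF X] small_obj[OF H[OF j]] c(1) U T u
      category_comp_hom[OF catA g y] category_comp_hom[OF catB k t] by simp
  have m2: "((X, c, H j), (f, p j), (U, u, T)) \<in> Hom K (X, c, H j) (U, u, T)"
    unfolding comma_Hom using small_obj[OF X] small_obj[OF H[OF j]] c U T u f cocone_hom[OF co j] by simp
  obtain s where s: "s \<in> Hom A U U" "Comp A s (Comp A y g) = f"
    using homogeneous_arr_fst[OF homog small_comma[OF X H[OF j] c(1)] m1 m2]
    unfolding comma_arr_fst_def by auto
  then have "Comp A (Comp A s y) g = f"
    using category_assoc[OF catA g y s(1)] by simp
  then show "\<exists>h \<in> Hom A Y U. Comp A h g = f" using category_comp_hom[OF catA y s(1)] by blast
qed

end

theorem proposition2p19: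
  fixes r :: "'i rel"
    and A :: "('oa,'ma) category" and B :: "('ob,'mb) category" and C :: "('oc,'mc) category"
    and Fo :: "'oa \<Rightarrow> 'oc" and Fm :: "'ma \<Rightarrow> 'mc"
    and Go :: "'ob \<Rightarrow> 'oc" and Gm :: "'mb \<Rightarrow> 'mc"
    and U :: 'oa and u :: 'mc and T :: 'ob
  assumes reg: "regular_cardinal r"
    and catA: "category A" and catB: "category B" and catC: "category C"
    and algA: "algebroidal A r" and algB: "algebroidal B r"
    and monoA: "all_mono A" and monoB: "all_mono B"
    and F: "is_functor A C Fo Fm" and G: "is_functor B C Go Gm"
    and F_faithful: "faithful A Fm"
    and F_cocont: "cocontinuous A C Fo Fm r"
    and F_small_cocont: "\<And>s :: 'i rel. Well_order s \<Longrightarrow> (s, r) \<in> ordLess \<Longrightarrow> small_cocontinuous A C Fo Fm s r"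
    and F_pres_small: "preserves_smallness_wrt A B C Fo Go Gm r"
    and G_small_cocont: "small_cocontinuous B C Go Gm r r"
    and G_mono: "preserves_monos B C Gm"
    and hom_bound: "\<And>X Y. small A r X \<Longrightarrow> small B r Y \<Longrightarrow>
                       (card_of (Hom C (Fo X) (Go Y)), r) \<in> ordLeq"
    and jep: "joint_embedding (comma A B C Fo Fm Go Gm) (small (comma A B C Fo Fm Go Gm) r)"
    and ap: "amalgamation (comma A B C Fo Fm Go Gm) (small (comma A B C Fo Fm Go Gm) r)"
    and univ: "universal (comma A B C Fo Fm Go Gm) (\<lambda>X. X \<in> Obj (comma A B C Fo Fm Go Gm)) (U, u, T)"
    and homog: "homogeneous (comma A B C Fo Fm Go Gm) (small (comma A B C Fo Fm Go Gm) r) (U, u, T)"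
  shows "saturated A (small A r) U \<longleftrightarrow>
         mixed_amalgamation A B C Fo Fm Go Gm (small A r) (small B r)"
proof -
  txt \<open>Faithfulness of \<open>F\<close>, the cocontinuity conditions for short chains and for \<open>G\<close>, the
    bound on hom-sets, and joint embedding and amalgamation are what the paper uses to construct
    a universal homogeneous object.\<close>
  interpret comma_functors A B C Fo Fm Go Gm
    using catA catB catC F G by unfold_locales
  have saA: "semi_algebroidal A r" and saB: "semi_algebroidal B r"
    using algA algB unfolding algebroidal_def by blast+
  have small_comma: "small K r (X, c, Y)"
    if "small A r X" "small B r Y" "c \<in> Hom C (Fo X) (Go Y)" for X Y c
    using small_comma_obj[OF reg monoA monoB saA saB F_cocont G_mono that] .
  show ?thesis
    using saturated_imp_mixed_amalgamation[OF monoB G_mono saB F_pres_small univ]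
      mixed_amalgamation_imp_saturated[OF saB F_pres_small univ homog small_comma]
    by blast
qed

end
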